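(* Let $\Delta$ be a distribution such that $\mathrm{tr}_{\tilde q}(\Delta)$ is well-defined. Then for every context $O[\cdot]$: $O[\Delta] \rightsquigarrow_\pi \Delta'$ if and only if $O[\mathrm{tr}_{\tilde q}(\Delta)] \rightsquigarrow_\pi \mathrm{tr}_{\tilde q}(\Delta')$.
   Context: lqCCS has a discard process $\mathbf{0}_{\tilde q}$, a deadlocked process that keeps and hides the qubits $\tilde q$. Extended configurations $\langle\!\langle \rho, P, R \rangle\!\rangle$ consist of a density operator, a process and an observer (a process without $\tau$ and restriction whose sums are only sums of inputs on distinct channels); $\bot$ is the deadlock configuration. The partial trace of a configuration over $\tilde q$ is $\mathrm{tr}_{\tilde q}(\langle\!\langle \rho, P, R \rangle\!\rangle) = \langle\!\langle \mathrm{tr}_{\tilde q}(\rho), P', R \rangle\!\rangle$ when $P \equiv P' \parallel \mathbf{0}_{\tilde q}$, with $\mathrm{tr}_{\tilde q}(\bot) = \bot$, extended to distributions by linearity (well-defined only when every configuration in the support discards $\tilde q$). Contexts are $O[\cdot] = [\cdot] \parallel R'$ with $R'$ an observer. $\rightsquigarrow_\pi$ is the enhanced semantics with index $\pi = \diamond$ when the process makes a standard probabilistic reduction (including superoperator application $\mathcal{E}_{\tilde x}(\rho)$ and measurements producing $\sum_m p_m\cdot\overline{\langle\!\langle \rho_m/p_m, P[m/y], R \rangle\!\rangle}$ with $\rho_m = (M_m)_{\tilde x}(\rho)$, $p_m = \mathrm{tr}(\rho_m)$, $[m/y]$ denoting substitution), or $\pi \in \{\ell,r\}^*$ naming the observer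 component that acts (observer superoperator/measurement, or communication with the process); transitions are lifted to distributions by linearity. *)

theory Defs
  imports "HOL-Probability.Probability_Mass_Function"
begin

type_synonym qubit = nat
type_synonym chan = nat
type_synonym var = nat

datatype val = Qb qubit | Nv nat
datatype expr = Var var | Val val
datatype bexp = BTrue | BEq expr expr | BNot bexp | BAnd bexp bexp

text \<open>Basis states are assignments of qubit names to bits; operators and density
  operators are matrices indexed by assignments.  An operator acting on a k-tuple of
  qubits is indexed by assignments of the positions 0..k-1.\<close>
type_synonym asgn = "nat \<Rightarrow> bool"
type_synonym op = "asgn \<Rightarrow> asgn \<Rightarrow> complex"
type_synonym dens = "asgn \<Rightarrow> asgn \<Rightarrow> complex"
text \<open>quantum state: the set of qubit names in scope and a density operator on them\<close>
type_synonym qst = "nat set \<times> dens"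

datatype proc =
    Nil
  | Discard "expr list"
  | Out chan expr proc
  | Inp chan var proc
  | Tau proc
  | SOp "op list" "expr list" proc      \<comment> \<open>E_x.P, E given by Kraus operators\<close>
  | Meas "op list" "expr list" var proc \<comment> \<open>M_x -> y.P, measurement operators M_m\<close>
  | Sum proc proc
  | Par proc proc
  | Res chan proc
  | If bexp proc proc

datatype act = TauA | OutA chan val | InA chan val

fun chan_of :: "act \<Rightarrow> chan option" where
  "chan_of TauA = None"
| "chan_of (OutA c v) = Some c"
| "chan_of (InA c v) = Some c"

fun esubst :: "var \<Rightarrow> val \<Rightarrow> expr \<Rightarrow> expr" where
  "esubst x v (Var y) = (if y = x then Val v else Var y)"
| "esubst x v (Val w) = Val w"

fun bsubst :: "var \<Rightarrow> val \<Rightarrow> bexp \<Rightarrow> bexp" where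
  "bsubst x v BTrue = BTrue"
| "bsubst x v (BEq e1 e2) = BEq (esubst x v e1) (esubst x v e2)"
| "bsubst x v (BNot b) = BNot (bsubst x v b)"
| "bsubst x v (BAnd b1 b2) = BAnd (bsubst x v b1) (bsubst x v b2)"

fun subst :: "var \<Rightarrow> val \<Rightarrow> proc \<Rightarrow> proc" where
  "subst x v Nil = Nil"
| "subst x v (Discard es) = Discard (map (esubst x v) es)"
| "subst x v (Out c e P) = Out c (esubst x v e) (subst x v P)"
| "subst x v (Inp c y P) = Inp c y (if y = x then P else subst x v P)"
| "subst x v (Tau P) = Tau (subst x v P)"
| "subst x v (SOp K es P) = SOp K (map (esubst x v) es) (subst x v P)"
| "subst x v (Meas M es y P) = Meas M (map (esubst x v) es) y (if y = x then P else subst x v P)"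
| "subst x v (Sum P Q) = Sum (subst x v P) (subst x v Q)"
| "subst x v (Par P Q) = Par (subst x v P) (subst x v Q)"
| "subst x v (Res c P) = Res c (subst x v P)"
| "subst x v (If b P Q) = If (bsubst x v b) (subst x v P) (subst x v Q)"

fun bval :: "bexp \<Rightarrow> bool option" where
  "bval BTrue = Some True"
| "bval (BEq (Val a) (Val b)) = Some (a = b)"
| "bval (BEq _ _) = None"
| "bval (BNot b) = map_option Not (bval b)"
| "bval (BAnd b1 b2) = (case (bval b1, bval b2) of (Some x, Some y) \<Rightarrow> Some (x \<and> y) | _ \<Rightarrow> None)"

fun fn :: "proc \<Rightarrow> chan set" where
  "fn Nil = {}"
| "fn (Discard es) = {}"
| "fn (Out c e P) = insert c (fn P)"
| "fn (Inp c x P) = insert c (fn P)"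
| "fn (Tau P) = fn P"
| "fn (SOp K es P) = fn P"
| "fn (Meas M es y P) = fn P"
| "fn (Sum P Q) = fn P \<union> fn Q"
| "fn (Par P Q) = fn P \<union> fn Q"
| "fn (Res c P) = fn P - {c}"
| "fn (If b P Q) = fn P \<union> fn Q"

fun qe :: "expr \<Rightarrow> qubit set" where
  "qe (Val (Qb q)) = {q}"
| "qe _ = {}"

fun qbits :: "proc \<Rightarrow> qubit set" where
  "qbits Nil = {}"
| "qbits (Discard es) = \<Union> (qe ` set es)"
| "qbits (Out c e P) = qe e \<union> qbits P"
| "qbits (Inp c x P) = qbits P"
| "qbits (Tau P) = qbits P"
| "qbits (SOp K es P) = \<Union> (qe ` set es) \<union> qbits P"
| "qbits (Meas M es y P) = \<Union> (qe ` set es) \<union> qbits P"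
| "qbits (Sum P Q) = qbits P \<union> qbits Q"
| "qbits (Par P Q) = qbits P \<union> qbits Q"
| "qbits (Res c P) = qbits P"
| "qbits (If b P Q) = qbits P \<union> qbits Q"

text \<open>Linearity of qubit usage (approximating the linear type system of lqCCS):
  parallel components own disjoint qubits, a sent qubit is not used afterwards,
  discarded qubits are distinct.\<close>
fun lin :: "proc \<Rightarrow> bool" where
  "lin Nil = True"
| "lin (Discard es) = distinct es"
| "lin (Out c e P) = (qe e \<inter> qbits P = {} \<and> lin P)"
| "lin (Inp c x P) = lin P"
| "lin (Tau P) = lin P"
| "lin (SOp K es P) = lin P"
| "lin (Meas M es y P) = lin P"
| "lin (Sum P Q) = (lin P \<and> lin Q)"
| "lin (Par P Q) = (lin P \<and> lin Q \<and> qbits P \<inter> qbits Q = {})"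
| "lin (Res c P) = lin P"
| "lin (If b P Q) = (lin P \<and> lin Q)"

fun sum_chans :: "proc \<Rightarrow> chan list" where
  "sum_chans (Sum P Q) = sum_chans P @ sum_chans Q"
| "sum_chans (Inp c x P) = [c]"
| "sum_chans _ = []"

fun is_obs :: "proc \<Rightarrow> bool" and inp_sum :: "proc \<Rightarrow> bool" where
  "is_obs Nil = True"
| "is_obs (Discard es) = True"
| "is_obs (Out c e P) = is_obs P"
| "is_obs (Inp c x P) = is_obs P"
| "is_obs (Tau P) = False"
| "is_obs (SOp K es P) = is_obs P"
| "is_obs (Meas M es y P) = is_obs P"
| "is_obs (Sum P Q) = (inp_sum P \<and> inp_sum Q \<and> distinct (sum_chans (Sum P Q)))"
| "is_obs (Par P Q) = (is_obs P \<and> is_obs Q)"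
| "is_obs (Res c P) = False"
| "is_obs (If b P Q) = (is_obs P \<and> is_obs Q)"
| "inp_sum (Sum P Q) = (inp_sum P \<and> inp_sum Q)"
| "inp_sum (Inp c x P) = is_obs P"
| "inp_sum Nil = False"
| "inp_sum (Discard es) = False"
| "inp_sum (Out c e P) = False"
| "inp_sum (Tau P) = False"
| "inp_sum (SOp K es P) = False"
| "inp_sum (Meas M es y P) = False"
| "inp_sum (Par P Q) = False"
| "inp_sum (Res c P) = False"
| "inp_sum (If b P Q) = False"

subsection \<open>Linear algebra on assignments\<close>

definition asg :: "nat set \<Rightarrow> asgn set" where
  "asg S = {c. \<forall>i. c i \<longrightarrow> i \<in> S}"

definition ovr :: "nat set \<Rightarrow> asgn \<Rightarrow> asgn \<Rightarrow> asgn" where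
  "ovr S c a = (\<lambda>j. if j \<in> S then c j else a j)"

text \<open>local (positional) view of the qubits qs in a global assignment\<close>
definition loc :: "qubit list \<Rightarrow> asgn \<Rightarrow> asgn" where
  "loc qs a = (\<lambda>i. i < length qs \<and> a (qs ! i))"

text \<open>write a positional assignment c back on the qubits qs\<close>
definition upd :: "qubit list \<Rightarrow> asgn \<Rightarrow> asgn \<Rightarrow> asgn" where
  "upd qs c a = (\<lambda>j. if j \<in> set qs then c (LEAST i. i < length qs \<and> qs ! i = j) else a j)"

text \<open>A_qs rho A_qs^dagger\<close>
definition apply_op :: "op \<Rightarrow> qubit list \<Rightarrow> dens \<Rightarrow> dens" where
  "apply_op A qs \<rho> = (\<lambda>a b. \<Sum>c\<in>asg {..<length qs}. \<Sum>d\<in>asg {..<length qs}.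
      A (loc qs a) c * \<rho> (upd qs c a) (upd qs d b) * cnj (A (loc qs b) d))"

text \<open>superoperator E_qs(rho) given by a list of Kraus operators\<close>
definition apply_sop :: "op list \<Rightarrow> qubit list \<Rightarrow> dens \<Rightarrow> dens" where
  "apply_sop Ks qs \<rho> = (\<lambda>a b. \<Sum>K\<leftarrow>Ks. apply_op K qs \<rho> a b)"

definition qtrace :: "qst \<Rightarrow> complex" where
  "qtrace s = (\<Sum>a\<in>asg (fst s). snd s a a)"

definition ptrace :: "qubit list \<Rightarrow> qst \<Rightarrow> qst" where
  "ptrace qs s = (fst s - set qs, \<lambda>a b.
     if (\<forall>q\<in>set qs. \<not> a q \<and> \<not> b q)
     then (\<Sum>c\<in>asg (set qs). snd s (ovr (set qs) c a) (ovr (set qs) c b)) else 0)"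

text \<open>measurement: rho_m = (M_m)_qs(rho), p_m = tr rho_m, post-state rho_m / p_m\<close>
definition meas_prob :: "op list \<Rightarrow> qubit list \<Rightarrow> qst \<Rightarrow> nat \<Rightarrow> real" where
  "meas_prob M qs s m = Re (qtrace (fst s, apply_op (M ! m) qs (snd s)))"

definition meas_post :: "op list \<Rightarrow> qubit list \<Rightarrow> qst \<Rightarrow> nat \<Rightarrow> qst" where
  "meas_post M qs s m = (fst s, \<lambda>a b. apply_op (M ! m) qs (snd s) a b / complex_of_real (meas_prob M qs s m))"

text \<open>sum_m p_m . <rho_m/p_m, P[m/y]>\<close>
definition meas_dist :: "op list \<Rightarrow> qubit list \<Rightarrow> var \<Rightarrow> proc \<Rightarrow> qst \<Rightarrow> (qst \<times> proc) pmf" where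
  "meas_dist M qs y P s = embed_pmf (\<lambda>x. \<Sum>m<length M.
      if x = (meas_post M qs s m, subst y (Nv m) P) then meas_prob M qs s m else 0)"

definition qargs :: "qubit list \<Rightarrow> expr list" where
  "qargs qs = map (\<lambda>q. Val (Qb q)) qs"

subsection \<open>Probabilistic labelled semantics of processes on a quantum state\<close>

inductive plts :: "qst \<Rightarrow> proc \<Rightarrow> act \<Rightarrow> (qst \<times> proc) pmf \<Rightarrow> bool" where
  p_tau: "plts s (Tau P) TauA (return_pmf (s, P))"
| p_out: "plts s (Out c (Val v) P) (OutA c v) (return_pmf (s, P))"
| p_inp: "plts s (Inp c x P) (InA c v) (return_pmf (s, subst x v P))"
| p_sop: "\<lbrakk> es = qargs qs; distinct qs; set qs \<subseteq> fst s \<rbrakk>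
          \<Longrightarrow> plts s (SOp Ks es P) TauA (return_pmf ((fst s, apply_sop Ks qs (snd s)), P))"
| p_meas: "\<lbrakk> es = qargs qs; distinct qs; set qs \<subseteq> fst s;
            \<forall>m<length M. meas_prob M qs s m \<ge> 0; (\<Sum>m<length M. meas_prob M qs s m) = 1 \<rbrakk>
          \<Longrightarrow> plts s (Meas M es y P) TauA (meas_dist M qs y P s)"
| p_suml: "plts s P \<alpha> \<Delta> \<Longrightarrow> plts s (Sum P Q) \<alpha> \<Delta>"
| p_sumr: "plts s Q \<alpha> \<Delta> \<Longrightarrow> plts s (Sum P Q) \<alpha> \<Delta>"
| p_parl: "plts s P \<alpha> \<Delta> \<Longrightarrow> plts s (Par P Q) \<alpha> (map_pmf (\<lambda>(s', P'). (s', Par P' Q)) \<Delta>)"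
| p_parr: "plts s Q \<alpha> \<Delta> \<Longrightarrow> plts s (Par P Q) \<alpha> (map_pmf (\<lambda>(s', Q'). (s', Par P Q')) \<Delta>)"
| p_comml: "\<lbrakk> plts s P (OutA c v) (return_pmf (s, P')); plts s Q (InA c v) (return_pmf (s, Q')) \<rbrakk>
          \<Longrightarrow> plts s (Par P Q) TauA (return_pmf (s, Par P' Q'))"
| p_commr: "\<lbrakk> plts s P (InA c v) (return_pmf (s, P')); plts s Q (OutA c v) (return_pmf (s, Q')) \<rbrakk>
          \<Longrightarrow> plts s (Par P Q) TauA (return_pmf (s, Par P' Q'))"
| p_res: "\<lbrakk> plts s P \<alpha> \<Delta>; chan_of \<alpha> \<noteq> Some c \<rbrakk>
          \<Longrightarrow> plts s (Res c P) \<alpha> (map_pmf (\<lambda>(s', P'). (s', Res c P')) \<Delta>)"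
| p_ift: "\<lbrakk> bval b = Some True; plts s P \<alpha> \<Delta> \<rbrakk> \<Longrightarrow> plts s (If b P Q) \<alpha> \<Delta>"
| p_iff: "\<lbrakk> bval b = Some False; plts s Q \<alpha> \<Delta> \<rbrakk> \<Longrightarrow> plts s (If b P Q) \<alpha> \<Delta>"

inductive scong :: "proc \<Rightarrow> proc \<Rightarrow> bool" (infix "\<equiv>\<^sub>s" 50) where
  sc_refl: "P \<equiv>\<^sub>s P"
| sc_sym: "P \<equiv>\<^sub>s Q \<Longrightarrow> Q \<equiv>\<^sub>s P"
| sc_trans: "P \<equiv>\<^sub>s Q \<Longrightarrow> Q \<equiv>\<^sub>s R \<Longrightarrow> P \<equiv>\<^sub>s R"
| sc_out: "P \<equiv>\<^sub>s Q \<Longrightarrow> Out c e P \<equiv>\<^sub>s Out c e Q"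
| sc_inp: "P \<equiv>\<^sub>s Q \<Longrightarrow> Inp c x P \<equiv>\<^sub>s Inp c x Q"
| sc_tau: "P \<equiv>\<^sub>s Q \<Longrightarrow> Tau P \<equiv>\<^sub>s Tau Q"
| sc_sop: "P \<equiv>\<^sub>s Q \<Longrightarrow> SOp K es P \<equiv>\<^sub>s SOp K es Q"
| sc_meas: "P \<equiv>\<^sub>s Q \<Longrightarrow> Meas M es y P \<equiv>\<^sub>s Meas M es y Q"
| sc_sum: "P \<equiv>\<^sub>s P' \<Longrightarrow> Q \<equiv>\<^sub>s Q' \<Longrightarrow> Sum P Q \<equiv>\<^sub>s Sum P' Q'"
| sc_par: "P \<equiv>\<^sub>s P' \<Longrightarrow> Q \<equiv>\<^sub>s Q' \<Longrightarrow> Par P Q \<equiv>\<^sub>s Par P' Q'"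
| sc_res: "P \<equiv>\<^sub>s Q \<Longrightarrow> Res c P \<equiv>\<^sub>s Res c Q"
| sc_if: "P \<equiv>\<^sub>s P' \<Longrightarrow> Q \<equiv>\<^sub>s Q' \<Longrightarrow> If b P Q \<equiv>\<^sub>s If b P' Q'"
| sc_par_nil: "Par P Nil \<equiv>\<^sub>s P"
| sc_par_comm: "Par P Q \<equiv>\<^sub>s Par Q P"
| sc_par_assoc: "Par (Par P Q) R \<equiv>\<^sub>s Par P (Par Q R)"
| sc_sum_nil: "Sum P Nil \<equiv>\<^sub>s P"
| sc_sum_comm: "Sum P Q \<equiv>\<^sub>s Sum Q P"
| sc_sum_assoc: "Sum (Sum P Q) R \<equiv>\<^sub>s Sum P (Sum Q R)"
| sc_res_nil: "Res c Nil \<equiv>\<^sub>s Nil"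
| sc_res_swap: "Res c (Res d P) \<equiv>\<^sub>s Res d (Res c P)"
| sc_res_extr: "c \<notin> fn P \<Longrightarrow> Par P (Res c Q) \<equiv>\<^sub>s Res c (Par P Q)"
| sc_discard_nil: "Discard [] \<equiv>\<^sub>s Nil"
| sc_discard_app: "Discard (xs @ ys) \<equiv>\<^sub>s Par (Discard xs) (Discard ys)"

subsection \<open>Extended configurations and the enhanced semantics\<close>

datatype conf = Conf qst proc proc   \<comment> \<open>\<langle>\<langle>rho, P, R\<rangle>\<rangle>, R an observer\<close>
  | Bot                              \<comment> \<open>the deadlock configuration\<close>

fun confeq :: "conf \<Rightarrow> conf \<Rightarrow> bool" where
  "confeq (Conf s P R) (Conf s' P' R') = (s = s' \<and> P \<equiv>\<^sub>s P' \<and> R = R')"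
| "confeq Bot Bot = True"
| "confeq _ _ = False"

datatype dir = Lft | Rgt
datatype idx = Diamond | Path "dir list"

text \<open>the observer component at path pi performs an action\<close>
inductive ostep :: "dir list \<Rightarrow> qst \<Rightarrow> proc \<Rightarrow> act \<Rightarrow> (qst \<times> proc) pmf \<Rightarrow> bool" where
  o_leaf: "\<lbrakk> \<forall>P Q. R \<noteq> Par P Q; plts s R \<alpha> \<Delta> \<rbrakk> \<Longrightarrow> ostep [] s R \<alpha> \<Delta>"
| o_l: "ostep \<pi> s R1 \<alpha> \<Delta> \<Longrightarrow> ostep (Lft # \<pi>) s (Par R1 R2) \<alpha> (map_pmf (\<lambda>(s', R'). (s', Par R' R2)) \<Delta>)"
| o_r: "ostep \<pi> s R2 \<alpha> \<Delta> \<Longrightarrow> ostep (Rgt # \<pi>) s (Par R1 R2) \<alpha> (map_pmf (\<lambda>(s', R'). (s', Par R1 R')) \<Delta>)"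

inductive esem :: "conf \<Rightarrow> idx \<Rightarrow> conf pmf \<Rightarrow> bool" where
  e_proc: "plts s P TauA \<Delta> \<Longrightarrow> esem (Conf s P R) Diamond (map_pmf (\<lambda>(s', P'). Conf s' P' R) \<Delta>)"
| e_obs: "ostep \<pi> s R TauA \<Delta> \<Longrightarrow> esem (Conf s P R) (Path \<pi>) (map_pmf (\<lambda>(s', R'). Conf s' P R') \<Delta>)"
| e_obs_out: "\<lbrakk> ostep \<pi> s R (OutA c v) (return_pmf (s, R')); plts s P (InA c v) (return_pmf (s, P')) \<rbrakk>
          \<Longrightarrow> esem (Conf s P R) (Path \<pi>) (return_pmf (Conf s P' R'))"
| e_obs_in: "\<lbrakk> ostep \<pi> s R (InA c v) (return_pmf (s, R')); plts s P (OutA c v) (return_pmf (s, P')) \<rbrakk>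
          \<Longrightarrow> esem (Conf s P R) (Path \<pi>) (return_pmf (Conf s P' R'))"
| e_cong: "\<lbrakk> confeq C C'; esem C' \<pi> \<Theta>'; rel_pmf confeq \<Theta>' \<Theta> \<rbrakk> \<Longrightarrow> esem C \<pi> \<Theta>"

text \<open>lifting to distributions by linearity\<close>
definition esem_d :: "idx \<Rightarrow> conf pmf \<Rightarrow> conf pmf \<Rightarrow> bool" where
  "esem_d \<pi> \<Delta> \<Theta> \<longleftrightarrow> (\<exists>\<Phi> :: (conf \<times> conf pmf) pmf.
      map_pmf fst \<Phi> = \<Delta> \<and> (\<forall>(C, \<Theta>') \<in> set_pmf \<Phi>. esem C \<pi> \<Theta>') \<and> \<Theta> = bind_pmf \<Phi> snd)"

text \<open>contexts O[.] = [.] || R'\<close>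
fun ctx :: "proc \<Rightarrow> conf \<Rightarrow> conf" where
  "ctx R' (Conf s P R) = Conf s P (Par R R')"
| "ctx R' Bot = Bot"

definition octx :: "proc \<Rightarrow> conf pmf \<Rightarrow> conf pmf" where
  "octx R' \<Delta> = map_pmf (ctx R') \<Delta>"

subsection \<open>Partial trace of configurations\<close>

definition discards :: "qubit list \<Rightarrow> conf \<Rightarrow> bool" where
  "discards qs C \<longleftrightarrow> C = Bot \<or> (\<exists>s P R P'. C = Conf s P R \<and> P \<equiv>\<^sub>s Par P' (Discard (qargs qs)))"

definition wd_tr :: "qubit list \<Rightarrow> conf pmf \<Rightarrow> bool" where
  "wd_tr qs \<Delta> \<longleftrightarrow> (\<forall>C \<in> set_pmf \<Delta>. discards qs C)"

fun ctr :: "qubit list \<Rightarrow> conf \<Rightarrow> conf" where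
  "ctr qs (Conf s P R) = Conf (ptrace qs s) (SOME P'. P \<equiv>\<^sub>s Par P' (Discard (qargs qs))) R"
| "ctr qs Bot = Bot"

definition ptr :: "qubit list \<Rightarrow> conf pmf \<Rightarrow> conf pmf" where
  "ptr qs \<Delta> = map_pmf (ctr qs) \<Delta>"

fun wf_conf :: "conf \<Rightarrow> bool" where
  "wf_conf (Conf s P R) = (is_obs R \<and> lin P \<and> lin R \<and> qbits P \<inter> qbits R = {}
                           \<and> qbits P \<union> qbits R \<subseteq> fst s)"
| "wf_conf Bot = True"

end

theory Submission
  imports Defs
begin

text \<open>The partial trace over the discarded qubits commutes with every step that does not act
  on them. In a well-formed configuration that discards \<open>q\<close>, linearity forces
  \<open>P \<equiv> A \<parallel> 0\<^sub>q\<close> with \<open>A\<close> and the observer disjoint from \<open>q\<close>; counting qubit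
  occurrences, which is invariant under \<open>\<equiv>\<close>, shows that \<open>A\<close> is unique up to \<open>\<equiv>\<close>.
  Since \<open>\<equiv>\<close> is a strong simulation, the moves of \<open>P\<close> are those of \<open>A\<close> with the discard
  carried along, and superoperators and measurements of \<open>A\<close> or of the observer act on qubits
  other than \<open>q\<close>, so they commute with the partial trace and keep their outcome
  probabilities. Both directions then lift to distributions through a coupling of the two
  decompositions.\<close>

section \<open>Qubit multiplicities and cancellation of discards\<close>

abbreviation discarding :: "qubit list \<Rightarrow> proc" where
  "discarding qs \<equiv> Discard (qargs qs)"

text \<open>Occurrences in parallel components add up while all other uses count once, so the
  multiplicity is invariant under structural congruence and at most one in linear processes.\<close>
fun qubit_mult :: "qubit \<Rightarrow> proc \<Rightarrow> nat" where
  "qubit_mult q Nil = 0"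
| "qubit_mult q (Discard es) = count_list es (Val (Qb q))"
| "qubit_mult q (Out c e P) = max (if q \<in> qe e then 1 else 0) (qubit_mult q P)"
| "qubit_mult q (Inp c x P) = qubit_mult q P"
| "qubit_mult q (Tau P) = qubit_mult q P"
| "qubit_mult q (SOp K es P) = max (if q \<in> \<Union> (qe ` set es) then 1 else 0) (qubit_mult q P)"
| "qubit_mult q (Meas M es y P) = max (if q \<in> \<Union> (qe ` set es) then 1 else 0) (qubit_mult q P)"
| "qubit_mult q (Sum P Q) = max (qubit_mult q P) (qubit_mult q Q)"
| "qubit_mult q (Par P Q) = qubit_mult q P + qubit_mult q Q"
| "qubit_mult q (Res c P) = qubit_mult q P"
| "qubit_mult q (If b P Q) = max (qubit_mult q P) (qubit_mult q Q)"

lemma mem_qe_iff: "q \<in> qe e \<longleftrightarrow> e = Val (Qb q)"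
  by (cases e rule: qe.cases) auto

lemma qubit_mult_eq_0_iff: "qubit_mult q P = 0 \<longleftrightarrow> q \<notin> qbits P"
  by (induction P) (auto simp: count_list_0_iff mem_qe_iff)

lemma distinct_count_list_le_1: "distinct xs \<Longrightarrow> count_list xs x \<le> 1"
  by (induction xs) (auto simp: count_list_0_iff)

lemma lin_qubit_mult_le_1: "lin P \<Longrightarrow> qubit_mult q P \<le> 1"
proof (induction P)
  case (Out c e P)
  then show ?case using qubit_mult_eq_0_iff[of q P] by auto
next
  case (Par P1 P2)
  then show ?case using qubit_mult_eq_0_iff[of q P1] qubit_mult_eq_0_iff[of q P2] by auto
qed (auto simp: distinct_count_list_le_1[unfolded One_nat_def])

lemma scong_qubit_mult: "P \<equiv>\<^sub>s Q \<Longrightarrow> qubit_mult q P = qubit_mult q Q"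
  by (induction rule: scong.induct) simp_all

lemma scong_qbits: "P \<equiv>\<^sub>s Q \<Longrightarrow> qbits P = qbits Q"
proof (rule set_eqI)
  fix q assume "P \<equiv>\<^sub>s Q"
  then have "qubit_mult q P = qubit_mult q Q" by (rule scong_qubit_mult)
  then show "q \<in> qbits P \<longleftrightarrow> q \<in> qbits Q"
    using qubit_mult_eq_0_iff[of q P] qubit_mult_eq_0_iff[of q Q] by simp
qed

lemma qe_qargs [simp]: "\<Union> (qe ` set (qargs qs)) = set qs"
  by (auto simp: qargs_def)

lemma lin_scong_Par_discarding_disjoint:
  assumes "P \<equiv>\<^sub>s Par A (discarding qs)" "lin P"
  shows "qbits A \<inter> set qs = {}"
proof (rule ccontr)
  assume "qbits A \<inter> set qs \<noteq> {}"
  then obtain q where "q \<in> qbits A" "q \<in> set qs" by auto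
  then have "qubit_mult q A \<noteq> 0" "qubit_mult q (discarding qs) \<noteq> 0"
    using qubit_mult_eq_0_iff[of q A] qubit_mult_eq_0_iff[of q "discarding qs"] by simp_all
  moreover have "qubit_mult q P = qubit_mult q A + qubit_mult q (discarding qs)"
    using scong_qubit_mult[OF assms(1)] by simp
  ultimately show False using lin_qubit_mult_le_1[OF assms(2), of q] by linarith
qed

lemmas scong_congs = sc_refl sc_out sc_inp sc_tau sc_sop sc_meas sc_sum sc_par sc_res sc_if
lemmas scong_axioms = sc_par_nil sc_par_comm sc_par_assoc sc_sum_nil sc_sum_comm sc_sum_assoc
  sc_res_nil sc_res_swap sc_res_extr sc_discard_nil sc_discard_app

fun drop_discards :: "qubit set \<Rightarrow> proc \<Rightarrow> proc" where
  "drop_discards S Nil = Nil"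
| "drop_discards S (Discard es) = Discard (filter (\<lambda>e. qe e \<inter> S = {}) es)"
| "drop_discards S (Out c e P) = Out c e (drop_discards S P)"
| "drop_discards S (Inp c x P) = Inp c x (drop_discards S P)"
| "drop_discards S (Tau P) = Tau (drop_discards S P)"
| "drop_discards S (SOp K es P) = SOp K es (drop_discards S P)"
| "drop_discards S (Meas M es y P) = Meas M es y (drop_discards S P)"
| "drop_discards S (Sum P Q) = Sum (drop_discards S P) (drop_discards S Q)"
| "drop_discards S (Par P Q) = Par (drop_discards S P) (drop_discards S Q)"
| "drop_discards S (Res c P) = Res c (drop_discards S P)"
| "drop_discards S (If b P Q) = If b (drop_discards S P) (drop_discards S Q)"

lemma fn_drop_discards [simp]: "fn (drop_discards S P) = fn P"
  by (induction P) auto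

lemma scong_drop_discards: "P \<equiv>\<^sub>s Q \<Longrightarrow> drop_discards S P \<equiv>\<^sub>s drop_discards S Q"
proof (induction rule: scong.induct)
  case (sc_sym P Q) then show ?case by (blast intro: scong.sc_sym)
next
  case (sc_trans P Q R) then show ?case by (blast intro: scong.sc_trans)
qed (simp_all add: scong_congs scong_axioms)

lemma drop_discards_disjoint: "qbits P \<inter> S = {} \<Longrightarrow> drop_discards S P = P"
  by (induction P) (auto simp: filter_id_conv)

lemma drop_discards_discarding [simp]: "drop_discards (set qs) (discarding qs) = Discard []"
  by (auto simp: qargs_def filter_empty_conv)

lemma scong_Par_cancel_qbits:
  assumes "Par A X \<equiv>\<^sub>s Par B X"
  shows "qbits A = qbits B"
proof -
  have "qubit_mult q A = qubit_mult q B" for q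
    using scong_qubit_mult[OF assms, of q] by simp
  then show ?thesis by (metis qubit_mult_eq_0_iff subsetI subset_antisym)
qed

text \<open>Cancellation works because removing the traced qubits from every discard maps
  congruent processes to congruent ones and leaves the disjoint residuals untouched.\<close>
lemma scong_Par_discarding_cancel:
  assumes "Par A (discarding qs) \<equiv>\<^sub>s Par B (discarding qs)" "qbits A \<inter> set qs = {}"
  shows "A \<equiv>\<^sub>s B"
proof -
  have B: "qbits B \<inter> set qs = {}" using scong_Par_cancel_qbits[OF assms(1)] assms(2) by simp
  have "drop_discards (set qs) (Par A (discarding qs))
      \<equiv>\<^sub>s drop_discards (set qs) (Par B (discarding qs))"
    by (rule scong_drop_discards[OF assms(1)])
  then have AB: "Par A (Discard []) \<equiv>\<^sub>s Par B (Discard [])"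
    by (simp only: drop_discards.simps(9) drop_discards_disjoint[OF assms(2)]
        drop_discards_disjoint[OF B] drop_discards_discarding)
  have unit: "Par X (Discard []) \<equiv>\<^sub>s X" for X
    by (rule sc_trans[OF sc_par[OF sc_refl sc_discard_nil] sc_par_nil])
  show ?thesis by (rule sc_trans[OF sc_sym[OF unit] sc_trans[OF AB unit]])
qed

section \<open>The partial trace commutes with operations on other qubits\<close>

definition trace_out :: "qubit list \<Rightarrow> dens \<Rightarrow> dens" where
  "trace_out qs \<rho> = (\<lambda>a b. if (\<forall>q\<in>set qs. \<not> a q \<and> \<not> b q)
     then (\<Sum>c\<in>asg (set qs). \<rho> (ovr (set qs) c a) (ovr (set qs) c b)) else 0)"

lemma ptrace_eq: "ptrace qs s = (fst s - set qs, trace_out qs (snd s))"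
  by (simp add: ptrace_def trace_out_def)

lemma fst_ptrace [simp]: "fst (ptrace qs s) = fst s - set qs"
  by (simp add: ptrace_def)

lemma loc_ovr_disjoint: "set xs \<inter> S = {} \<Longrightarrow> loc xs (ovr S c a) = loc xs a"
  by (auto simp: loc_def ovr_def fun_eq_iff dest: nth_mem)

lemma upd_notin: "j \<notin> set xs \<Longrightarrow> upd xs c a j = a j"
  by (simp add: upd_def)

lemma upd_ovr_disjoint: "set xs \<inter> S = {} \<Longrightarrow> upd xs c (ovr S e a) = ovr S e (upd xs c a)"
  by (auto simp: upd_def ovr_def fun_eq_iff)

lemma trace_out_apply_op:
  assumes "set xs \<inter> set qs = {}"
  shows "trace_out qs (apply_op A xs \<rho>) = apply_op A xs (trace_out qs \<rho>)"
proof (intro ext)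
  fix a b
  let ?Q = "set qs" and ?X = "asg {..<length xs}"
  have cond: "(\<forall>q\<in>?Q. \<not> upd xs c a q \<and> \<not> upd xs d b q) \<longleftrightarrow> (\<forall>q\<in>?Q. \<not> a q \<and> \<not> b q)" for c d
    using assms by (metis disjoint_iff upd_notin)
  show "trace_out qs (apply_op A xs \<rho>) a b = apply_op A xs (trace_out qs \<rho>) a b"
  proof (cases "\<forall>q\<in>?Q. \<not> a q \<and> \<not> b q")
    case True
    have "trace_out qs (apply_op A xs \<rho>) a b = (\<Sum>e\<in>asg ?Q. \<Sum>c\<in>?X. \<Sum>d\<in>?X.
         A (loc xs a) c * \<rho> (ovr ?Q e (upd xs c a)) (ovr ?Q e (upd xs d b)) * cnj (A (loc xs b) d))"
      using True assms by (simp add: trace_out_def apply_op_def loc_ovr_disjoint upd_ovr_disjoint)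
    also have "\<dots> = (\<Sum>c\<in>?X. \<Sum>d\<in>?X. \<Sum>e\<in>asg ?Q.
         A (loc xs a) c * \<rho> (ovr ?Q e (upd xs c a)) (ovr ?Q e (upd xs d b)) * cnj (A (loc xs b) d))"
      by (subst sum.swap) (simp add: sum.swap[where A = "asg ?Q"])
    also have "\<dots> = apply_op A xs (trace_out qs \<rho>) a b"
      using True by (simp add: apply_op_def trace_out_def cond sum_distrib_left sum_distrib_right)
    finally show ?thesis .
  next
    case False
    have "apply_op A xs (trace_out qs \<rho>) a b = 0"
      unfolding apply_op_def trace_out_def
      by (intro sum.neutral ballI) (simp only: cond False if_False mult_zero_left mult_zero_right)
    moreover have "trace_out qs (apply_op A xs \<rho>) a b = 0"
      using False by (simp only: trace_out_def if_False)
    ultimately show ?thesis by simp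
  qed
qed

lemma trace_out_apply_sop:
  assumes "set xs \<inter> set qs = {}"
  shows "trace_out qs (apply_sop Ks xs \<rho>) = apply_sop Ks xs (trace_out qs \<rho>)"
proof (induction Ks)
  case Nil
  then show ?case by (simp add: apply_sop_def trace_out_def fun_eq_iff)
next
  case (Cons K Ks)
  have "trace_out qs (\<lambda>a b. f a b + g a b) = (\<lambda>a b. trace_out qs f a b + trace_out qs g a b)" for f g
    by (auto simp: trace_out_def fun_eq_iff sum.distrib)
  then show ?case using Cons trace_out_apply_op[OF assms] by (simp add: apply_sop_def)
qed

lemma ovr_bij_betw_asg:
  assumes "Q \<subseteq> F"
  shows "bij_betw (\<lambda>(a, e). ovr Q e a) (asg (F - Q) \<times> asg Q) (asg F)"
proof (rule bij_betwI')
  fix x y assume "x \<in> asg (F - Q) \<times> asg Q" "y \<in> asg (F - Q) \<times> asg Q"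
  then show "((case x of (a, e) \<Rightarrow> ovr Q e a) = (case y of (a, e) \<Rightarrow> ovr Q e a)) = (x = y)"
    by (auto simp: asg_def ovr_def fun_eq_iff split: prod.splits)
next
  fix x assume "x \<in> asg (F - Q) \<times> asg Q"
  then show "(case x of (a, e) \<Rightarrow> ovr Q e a) \<in> asg F"
    using assms by (auto simp: asg_def ovr_def split: prod.splits)
next
  fix c assume "c \<in> asg F"
  then have "(\<lambda>j. c j \<and> j \<notin> Q, \<lambda>j. c j \<and> j \<in> Q) \<in> asg (F - Q) \<times> asg Q"
    "c = ovr Q (\<lambda>j. c j \<and> j \<in> Q) (\<lambda>j. c j \<and> j \<notin> Q)"
    by (auto simp: asg_def ovr_def)
  then show "\<exists>x\<in>asg (F - Q) \<times> asg Q. c = (case x of (a, e) \<Rightarrow> ovr Q e a)" by auto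
qed

lemma qtrace_ptrace:
  assumes "set qs \<subseteq> fst s"
  shows "qtrace (ptrace qs s) = qtrace s"
proof -
  let ?Q = "set qs" and ?F = "fst s"
  have "qtrace (ptrace qs s) = (\<Sum>a\<in>asg (?F - ?Q). \<Sum>e\<in>asg ?Q. snd s (ovr ?Q e a) (ovr ?Q e a))"
    unfolding qtrace_def ptrace_eq trace_out_def by (intro sum.cong) (auto simp: asg_def)
  also have "\<dots> = (\<Sum>(a, e)\<in>asg (?F - ?Q) \<times> asg ?Q. snd s (ovr ?Q e a) (ovr ?Q e a))"
    by (rule sum.cartesian_product)
  also have "\<dots> = qtrace s"
    unfolding qtrace_def using sum.reindex_bij_betw[OF ovr_bij_betw_asg[OF assms], of "\<lambda>c. snd s c c"]
    by (simp add: case_prod_unfold)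
  finally show ?thesis .
qed

lemma meas_prob_ptrace:
  assumes "set xs \<inter> set qs = {}" "set qs \<subseteq> fst s"
  shows "meas_prob M xs (ptrace qs s) m = meas_prob M xs s m"
proof -
  have "(fst s - set qs, apply_op (M ! m) xs (snd (ptrace qs s)))
      = ptrace qs (fst s, apply_op (M ! m) xs (snd s))"
    by (simp add: ptrace_eq trace_out_apply_op[OF assms(1)])
  then show ?thesis
    using qtrace_ptrace[of qs "(fst s, apply_op (M ! m) xs (snd s))"] assms(2)
    by (simp add: meas_prob_def)
qed

lemma meas_post_ptrace:
  assumes "set xs \<inter> set qs = {}" "set qs \<subseteq> fst s"
  shows "meas_post M xs (ptrace qs s) m = ptrace qs (meas_post M xs s m)"
proof -
  have "trace_out qs (\<lambda>a b. f a b / z) = (\<lambda>a b. trace_out qs f a b / z)" for f z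
    by (auto simp: trace_out_def fun_eq_iff sum_divide_distrib)
  then show ?thesis
    using meas_prob_ptrace[OF assms] assms
    by (simp add: meas_post_def ptrace_eq trace_out_apply_op)
qed

lemma apply_sop_ptrace:
  assumes "set xs \<inter> set qs = {}"
  shows "(fst s - set qs, apply_sop Ks xs (snd (ptrace qs s)))
    = ptrace qs (fst s, apply_sop Ks xs (snd s))"
  using assms by (simp add: ptrace_eq trace_out_apply_sop)

section \<open>Transitions of processes and observers\<close>

definition meas_outcome :: "op list \<Rightarrow> qubit list \<Rightarrow> qst \<Rightarrow> nat pmf" where
  "meas_outcome M xs s = embed_pmf (\<lambda>m. if m < length M then meas_prob M xs s m else 0)"

lemma pmf_meas_outcome:
  assumes "\<forall>m<length M. meas_prob M xs s m \<ge> 0" "(\<Sum>m<length M. meas_prob M xs s m) = 1"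
  shows "pmf (meas_outcome M xs s) m = (if m < length M then meas_prob M xs s m else 0)"
  unfolding meas_outcome_def
proof (rule pmf_embed_pmf)
  show "0 \<le> (if m < length M then meas_prob M xs s m else 0)" for m using assms by auto
  have "(\<integral>\<^sup>+ m. ennreal (if m < length M then meas_prob M xs s m else 0) \<partial>count_space UNIV)
      = (\<Sum>m<length M. ennreal (meas_prob M xs s m))"
    by (subst nn_integral_count_space'[where A = "{..<length M}"]) auto
  also have "\<dots> = 1" using assms by (subst sum_ennreal) auto
  finally show "(\<integral>\<^sup>+ m. ennreal (if m < length M then meas_prob M xs s m else 0) \<partial>count_space UNIV) = 1" .
qed

lemma meas_dist_eq_map_pmf:
  assumes "\<forall>m<length M. meas_prob M xs s m \<ge> 0" "(\<Sum>m<length M. meas_prob M xs s m) = 1"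
  shows "meas_dist M xs y P s = map_pmf (\<lambda>m. (meas_post M xs s m, subst y (Nv m) P)) (meas_outcome M xs s)"
proof -
  let ?g = "\<lambda>m. (meas_post M xs s m, subst y (Nv m) P)"
  let ?\<mu> = "meas_outcome M xs s"
  have sub: "set_pmf ?\<mu> \<subseteq> {..<length M}"
    using pmf_meas_outcome[OF assms] by (auto simp: set_pmf_eq)
  have "pmf (map_pmf ?g ?\<mu>) x = (\<Sum>m<length M. if x = ?g m then meas_prob M xs s m else 0)" for x
  proof -
    have "?g -` {x} \<inter> set_pmf ?\<mu> = {m \<in> {..<length M}. ?g m = x} \<inter> set_pmf ?\<mu>"
      using sub by auto
    then have "pmf (map_pmf ?g ?\<mu>) x = measure_pmf.prob ?\<mu> {m \<in> {..<length M}. ?g m = x}"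
      by (simp only: measure_Int_set_pmf pmf_map flip: measure_Int_set_pmf[of _ "?g -` {x}"])
    also have "\<dots> = (\<Sum>m\<in>{m \<in> {..<length M}. ?g m = x}. pmf ?\<mu> m)"
      by (simp add: measure_measure_pmf_finite)
    also have "\<dots> = (\<Sum>m<length M. if x = ?g m then meas_prob M xs s m else 0)"
      by (subst sum.inter_filter[symmetric]) (auto simp: pmf_meas_outcome[OF assms] intro!: sum.cong)
    finally show ?thesis .
  qed
  then have "pmf (map_pmf ?g ?\<mu>) = (\<lambda>x. \<Sum>m<length M. if x = ?g m then meas_prob M xs s m else 0)"
    by (rule ext)
  moreover have "embed_pmf (pmf (map_pmf ?g ?\<mu>)) = map_pmf ?g ?\<mu>"
    by (rule type_definition.Rep_inverse[OF td_pmf_embed_pmf])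
  ultimately show ?thesis unfolding meas_dist_def by simp
qed

lemma meas_outcome_ptrace:
  assumes "set xs \<inter> set qs = {}" "set qs \<subseteq> fst s"
  shows "meas_outcome M xs (ptrace qs s) = meas_outcome M xs s"
  unfolding meas_outcome_def meas_prob_ptrace[OF assms] ..

lemma meas_dist_ptrace:
  assumes "set xs \<inter> set qs = {}" "set qs \<subseteq> fst s"
    "\<forall>m<length M. meas_prob M xs s m \<ge> 0" "(\<Sum>m<length M. meas_prob M xs s m) = 1"
  shows "meas_dist M xs y P (ptrace qs s) = map_pmf (apfst (ptrace qs)) (meas_dist M xs y P s)"
  using assms(3,4)
  by (simp add: meas_dist_eq_map_pmf meas_prob_ptrace[OF assms(1,2)] pmf.map_comp comp_def
      meas_outcome_ptrace[OF assms(1,2)] meas_post_ptrace[OF assms(1,2)])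

inductive_cases plts_OutE: "plts s (Out c e P) \<alpha> \<Delta>"
inductive_cases plts_InpE: "plts s (Inp c x P) \<alpha> \<Delta>"
inductive_cases plts_TauE: "plts s (Tau P) \<alpha> \<Delta>"
inductive_cases plts_SOpE: "plts s (SOp K es P) \<alpha> \<Delta>"
inductive_cases plts_MeasE: "plts s (Meas M es y P) \<alpha> \<Delta>"
inductive_cases plts_SumE: "plts s (Sum P Q) \<alpha> \<Delta>"
inductive_cases plts_Par_cases: "plts s (Par P Q) \<alpha> \<Delta>"
inductive_cases plts_ResE: "plts s (Res c P) \<alpha> \<Delta>"
inductive_cases plts_IfE: "plts s (If b P Q) \<alpha> \<Delta>"

lemma plts_Nil_iff [simp]: "plts s Nil \<alpha> \<Delta> \<longleftrightarrow> False"
  by (auto elim: plts.cases)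

lemma plts_Discard_iff [simp]: "plts s (Discard es) \<alpha> \<Delta> \<longleftrightarrow> False"
  by (auto elim: plts.cases)

lemma plts_visible:
  "plts s P \<alpha> \<Delta> \<Longrightarrow> \<alpha> \<noteq> TauA \<Longrightarrow>
     \<exists>P'. \<Delta> = return_pmf (s, P') \<and> (\<forall>s'. plts s' P \<alpha> (return_pmf (s', P')))"
proof (induction rule: plts.induct)
  case (p_parl s P \<alpha> \<Delta> Q)
  then show ?case using plts.p_parl[of _ P \<alpha> _ Q] by fastforce
next
  case (p_parr s Q \<alpha> \<Delta> P)
  then show ?case using plts.p_parr[of _ Q \<alpha> _ P] by fastforce
next
  case (p_res s P \<alpha> \<Delta> c)
  then show ?case using plts.p_res[of _ P \<alpha> _ c] by fastforce
qed (auto intro: plts.intros)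

lemma plts_visible_any_state:
  "plts s P \<alpha> (return_pmf (s, P')) \<Longrightarrow> \<alpha> \<noteq> TauA \<Longrightarrow> plts s' P \<alpha> (return_pmf (s', P'))"
  using plts_visible by fastforce

fun val_qbits :: "val \<Rightarrow> qubit set" where
  "val_qbits (Qb q) = {q}"
| "val_qbits (Nv n) = {}"

fun act_qbits :: "act \<Rightarrow> qubit set" where
  "act_qbits (InA c v) = val_qbits v"
| "act_qbits _ = {}"

lemma qe_Val [simp]: "qe (Val v) = val_qbits v"
  by (cases v) auto

lemma qe_esubst: "qe (esubst x v e) \<subseteq> qe e \<union> val_qbits v"
  by (cases e) auto

lemma qbits_subst: "qbits (subst x v P) \<subseteq> qbits P \<union> val_qbits v"
proof -
  have qes: "\<Union> (qe ` set (map (esubst x v) es)) \<subseteq> \<Union> (qe ` set es) \<union> val_qbits v" for es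
    using qe_esubst[of x v] by fastforce
  show ?thesis
  proof (induction P)
    case (Discard es)
    then show ?case using qes[of es] by simp
  next
    case (Out c e P)
    then show ?case using qe_esubst[of x v e] by auto
  next
    case (SOp K es P)
    then show ?case using qes[of es] by auto
  next
    case (Meas M es y P)
    then show ?case using qes[of es] by auto
  qed auto
qed

lemma fn_subst [simp]: "fn (subst x v P) = fn P"
  by (induction P) auto

lemma set_meas_dist:
  assumes "\<forall>m<length M. meas_prob M xs s m \<ge> 0" "(\<Sum>m<length M. meas_prob M xs s m) = 1"
  shows "set_pmf (meas_dist M xs y P s) \<subseteq> range (\<lambda>m. (meas_post M xs s m, subst y (Nv m) P))"
  by (auto simp: meas_dist_eq_map_pmf[OF assms])

lemma plts_OutA_qbits: "plts s P (OutA c v) \<Delta> \<Longrightarrow> val_qbits v \<subseteq> qbits P"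
  by (induction P "OutA c v" \<Delta> rule: plts.induct) auto

lemma plts_chan_fn: "plts s P \<alpha> \<Delta> \<Longrightarrow> chan_of \<alpha> = Some c \<Longrightarrow> c \<in> fn P"
  by (induction rule: plts.induct) auto

lemma plts_derivative:
  "plts s P \<alpha> \<Delta> \<Longrightarrow> (s', P') \<in> set_pmf \<Delta> \<Longrightarrow> fn P' \<subseteq> fn P \<and> qbits P' \<subseteq> qbits P \<union> act_qbits \<alpha>"
proof (induction arbitrary: s' P' rule: plts.induct)
  case (p_inp s c y P v)
  then show ?case using qbits_subst[of y v P] by auto
next
  case (p_meas es qs s M y P)
  then obtain m where "P' = subst y (Nv m) P"
    using set_meas_dist[OF p_meas.hyps(4,5), of y P] by blast
  then show ?case using qbits_subst[of y "Nv m" P] by auto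
next
  case (p_comml s P c v P' Q Q')
  then show ?case using plts_OutA_qbits[OF p_comml.hyps(1)] by fastforce
next
  case (p_commr s P c v P' Q Q')
  then show ?case using plts_OutA_qbits[OF p_commr.hyps(2)] by fastforce
qed fastforce+

lemma plts_derivative_fn: "plts s P \<alpha> \<Delta> \<Longrightarrow> (s', P') \<in> set_pmf \<Delta> \<Longrightarrow> c \<notin> fn P \<Longrightarrow> c \<notin> fn P'"
  using plts_derivative by blast

definition dual :: "act \<Rightarrow> act \<Rightarrow> bool" where
  "dual \<alpha> \<beta> \<longleftrightarrow> (\<exists>c v. \<alpha> = OutA c v \<and> \<beta> = InA c v \<or> \<alpha> = InA c v \<and> \<beta> = OutA c v)"

lemma dual_sym: "dual \<alpha> \<beta> \<Longrightarrow> dual \<beta> \<alpha>"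
  by (auto simp: dual_def)

lemma dual_visible: "dual \<alpha> \<beta> \<Longrightarrow> \<alpha> \<noteq> TauA \<and> \<beta> \<noteq> TauA"
  by (auto simp: dual_def)

lemma dual_chan_of: "dual \<alpha> \<beta> \<Longrightarrow> chan_of \<alpha> = chan_of \<beta>"
  by (auto simp: dual_def)

lemma plts_comm:
  "dual \<alpha> \<beta> \<Longrightarrow> plts s P \<alpha> (return_pmf (s, P')) \<Longrightarrow> plts s Q \<beta> (return_pmf (s, Q')) \<Longrightarrow>
     plts s (Par P Q) TauA (return_pmf (s, Par P' Q'))"
  by (auto simp: dual_def intro: plts.p_comml plts.p_commr)

lemma plts_ParE [consumes 1, case_names left right comm]:
  assumes "plts s (Par P Q) \<alpha> \<Delta>"
  obtains \<Delta>1 where "plts s P \<alpha> \<Delta>1" "\<Delta> = map_pmf (\<lambda>(s', P'). (s', Par P' Q)) \<Delta>1"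
  | \<Delta>1 where "plts s Q \<alpha> \<Delta>1" "\<Delta> = map_pmf (\<lambda>(s', Q'). (s', Par P Q')) \<Delta>1"
  | \<beta> \<gamma> P' Q' where "dual \<beta> \<gamma>" "\<alpha> = TauA" "\<Delta> = return_pmf (s, Par P' Q')"
      "plts s P \<beta> (return_pmf (s, P'))" "plts s Q \<gamma> (return_pmf (s, Q'))"
  using assms by (rule plts_Par_cases) (unfold dual_def, blast+)

lemma plts_Par_left_return:
  "plts s P \<alpha> (return_pmf (s, P')) \<Longrightarrow> plts s (Par P Q) \<alpha> (return_pmf (s, Par P' Q))"
  using plts.p_parl[of s P \<alpha> "return_pmf (s, P')" Q] by simp

lemma plts_Par_right_return:
  "plts s Q \<alpha> (return_pmf (s, Q')) \<Longrightarrow> plts s (Par P Q) \<alpha> (return_pmf (s, Par P Q'))"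
  using plts.p_parr[of s Q \<alpha> "return_pmf (s, Q')" P] by simp

lemma plts_Res_return:
  "plts s P \<alpha> (return_pmf (s, P')) \<Longrightarrow> chan_of \<alpha> \<noteq> Some c \<Longrightarrow>
     plts s (Res c P) \<alpha> (return_pmf (s, Res c P'))"
  using plts.p_res[of s P \<alpha> "return_pmf (s, P')" c] by simp

lemma plts_Par_visible:
  assumes "plts s (Par P Q) \<alpha> (return_pmf (s, X))" "\<alpha> \<noteq> TauA"
  shows "(\<exists>P'. plts s P \<alpha> (return_pmf (s, P')) \<and> X = Par P' Q) \<or>
         (\<exists>Q'. plts s Q \<alpha> (return_pmf (s, Q')) \<and> X = Par P Q')"
  using assms(1)
proof (cases rule: plts_ParE)
  case (left \<Delta>1)
  then show ?thesis using plts_visible[OF left(1) assms(2)] by auto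
next
  case (right \<Delta>1)
  then show ?thesis using plts_visible[OF right(1) assms(2)] by auto
qed (use assms(2) in simp)

lemma plts_Res_visible:
  assumes "plts s (Res c P) \<alpha> (return_pmf (s, X))" "\<alpha> \<noteq> TauA"
  shows "\<exists>P'. plts s P \<alpha> (return_pmf (s, P')) \<and> X = Res c P' \<and> chan_of \<alpha> \<noteq> Some c"
  using assms(1)
proof (rule plts_ResE)
  fix \<Delta>1 assume "return_pmf (s, X) = map_pmf (\<lambda>(s', P'). (s', Res c P')) \<Delta>1"
    "plts s P \<alpha> \<Delta>1" "chan_of \<alpha> \<noteq> Some c"
  then show ?thesis using plts_visible[OF _ assms(2)] by fastforce
qed

lemma map_pmf_apfst_map_pmf_proc:
  "map_pmf (apfst h) (map_pmf (\<lambda>(s', P'). (s', g P')) \<Delta>)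
     = map_pmf (\<lambda>(s', P'). (s', g P')) (map_pmf (apfst h) \<Delta>)"
  by (simp add: pmf.map_comp comp_def case_prod_beta)

lemma plts_ptrace:
  "plts s A \<alpha> \<Delta> \<Longrightarrow> qbits A \<inter> set qs = {} \<Longrightarrow> set qs \<subseteq> fst s \<Longrightarrow>
     plts (ptrace qs s) A \<alpha> (map_pmf (apfst (ptrace qs)) \<Delta>)"
proof (induction rule: plts.induct)
  case (p_sop es xs s Ks P)
  then have "set xs \<inter> set qs = {}" by auto
  moreover have "plts (ptrace qs s) (SOp Ks es P) TauA
      (return_pmf ((fst (ptrace qs s), apply_sop Ks xs (snd (ptrace qs s))), P))"
    using p_sop by (intro plts.p_sop) auto
  ultimately show ?case by (simp add: apply_sop_ptrace)
next
  case (p_meas es xs s M y P)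
  then have "set xs \<inter> set qs = {}" by auto
  moreover have "plts (ptrace qs s) (Meas M es y P) TauA (meas_dist M xs y P (ptrace qs s))"
    using p_meas calculation by (intro plts.p_meas) (auto simp: meas_prob_ptrace)
  ultimately show ?case using p_meas by (simp add: meas_dist_ptrace)
next
  case (p_comml s P c v P' Q Q')
  then show ?case using plts.p_comml[of "ptrace qs s" P c v P' Q Q'] by auto
next
  case (p_commr s P c v P' Q Q')
  then show ?case using plts.p_commr[of "ptrace qs s" P c v P' Q Q'] by auto
qed (auto simp: map_pmf_apfst_map_pmf_proc intro: plts.p_tau plts.p_out plts.p_inp
    plts.p_suml plts.p_sumr plts.p_parl plts.p_parr plts.p_res plts.p_ift plts.p_iff)

lemma plts_ptrace_reflect:
  "plts t A \<alpha> \<Delta>' \<Longrightarrow> t = ptrace qs s \<Longrightarrow> set qs \<subseteq> fst s \<Longrightarrow>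
     \<exists>\<Delta>. plts s A \<alpha> \<Delta> \<and> \<Delta>' = map_pmf (apfst (ptrace qs)) \<Delta>"
proof (induction arbitrary: s rule: plts.induct)
  case (p_sop es xs t Ks P)
  then have "set xs \<inter> set qs = {}" by auto
  moreover have "plts s (SOp Ks es P) TauA (return_pmf ((fst s, apply_sop Ks xs (snd s)), P))"
    using p_sop by (intro plts.p_sop) auto
  ultimately show ?case using p_sop.prems by (auto simp: apply_sop_ptrace)
next
  case (p_meas es xs t M y P)
  then have xs: "set xs \<inter> set qs = {}" by auto
  have "\<forall>m<length M. meas_prob M xs s m \<ge> 0" "(\<Sum>m<length M. meas_prob M xs s m) = 1"
    using p_meas by (simp_all add: meas_prob_ptrace[OF xs p_meas.prems(2)])
  moreover from calculation have "plts s (Meas M es y P) TauA (meas_dist M xs y P s)"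
    using p_meas by (intro plts.p_meas) auto
  ultimately show ?case using p_meas xs by (auto simp: meas_dist_ptrace)
next
  case (p_comml t P c v P' Q Q')
  then have "plts s P (OutA c v) (return_pmf (s, P'))" "plts s Q (InA c v) (return_pmf (s, Q'))"
    using plts_visible_any_state by blast+
  then show ?case using p_comml.prems plts.p_comml by fastforce
next
  case (p_commr t P c v P' Q Q')
  then have "plts s P (InA c v) (return_pmf (s, P'))" "plts s Q (OutA c v) (return_pmf (s, Q'))"
    using plts_visible_any_state by blast+
  then show ?case using p_commr.prems plts.p_commr by fastforce
qed (fastforce simp: map_pmf_apfst_map_pmf_proc intro: plts.p_tau plts.p_out plts.p_inp
    plts.p_suml plts.p_sumr plts.p_parl plts.p_parr plts.p_res plts.p_ift plts.p_iff)+

lemma ostep_visible: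
  "ostep \<pi> s R \<alpha> \<Delta> \<Longrightarrow> \<alpha> \<noteq> TauA \<Longrightarrow>
     \<exists>R'. \<Delta> = return_pmf (s, R') \<and> (\<forall>s'. ostep \<pi> s' R \<alpha> (return_pmf (s', R')))"
proof (induction rule: ostep.induct)
  case (o_leaf R s \<alpha> \<Delta>)
  then show ?case using plts_visible by (blast intro: ostep.o_leaf)
next
  case (o_l \<pi> s R1 \<alpha> \<Delta> R2)
  then show ?case using ostep.o_l[of \<pi> _ R1 \<alpha> _ R2] by fastforce
next
  case (o_r \<pi> s R2 \<alpha> \<Delta> R1)
  then show ?case using ostep.o_r[of \<pi> _ R2 \<alpha> _ R1] by fastforce
qed

lemma ostep_visible_any_state:
  "ostep \<pi> s R \<alpha> (return_pmf (s, R')) \<Longrightarrow> \<alpha> \<noteq> TauA \<Longrightarrow> ostep \<pi> s' R \<alpha> (return_pmf (s', R'))"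
  using ostep_visible by fastforce

lemma ostep_OutA_qbits: "ostep \<pi> s R (OutA c v) \<Delta> \<Longrightarrow> val_qbits v \<subseteq> qbits R"
  by (induction \<pi> s R "OutA c v" \<Delta> rule: ostep.induct) (auto dest: plts_OutA_qbits)

lemma ostep_ptrace:
  "ostep \<pi> s R \<alpha> \<Delta> \<Longrightarrow> qbits R \<inter> set qs = {} \<Longrightarrow> set qs \<subseteq> fst s \<Longrightarrow>
     ostep \<pi> (ptrace qs s) R \<alpha> (map_pmf (apfst (ptrace qs)) \<Delta>)"
proof (induction rule: ostep.induct)
  case (o_leaf R s \<alpha> \<Delta>)
  then show ?case using plts_ptrace by (blast intro: ostep.o_leaf)
next
  case (o_l \<pi> s R1 \<alpha> \<Delta> R2)
  then show ?case using ostep.o_l[of \<pi> "ptrace qs s" R1 \<alpha> "map_pmf (apfst (ptrace qs)) \<Delta>" R2]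
    by (simp add: map_pmf_apfst_map_pmf_proc Int_Un_distrib2)
next
  case (o_r \<pi> s R2 \<alpha> \<Delta> R1)
  then show ?case using ostep.o_r[of \<pi> "ptrace qs s" R2 \<alpha> "map_pmf (apfst (ptrace qs)) \<Delta>" R1]
    by (simp add: map_pmf_apfst_map_pmf_proc Int_Un_distrib2)
qed

lemma ostep_ptrace_reflect:
  "ostep \<pi> t R \<alpha> \<Delta>' \<Longrightarrow> t = ptrace qs s \<Longrightarrow> set qs \<subseteq> fst s \<Longrightarrow>
     \<exists>\<Delta>. ostep \<pi> s R \<alpha> \<Delta> \<and> \<Delta>' = map_pmf (apfst (ptrace qs)) \<Delta>"
proof (induction arbitrary: s rule: ostep.induct)
  case (o_leaf R t \<alpha> \<Delta>)
  then show ?case using plts_ptrace_reflect by (blast intro: ostep.o_leaf)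
next
  case (o_l \<pi> t R1 \<alpha> \<Delta> R2)
  then obtain \<Delta>0 where "ostep \<pi> s R1 \<alpha> \<Delta>0" "\<Delta> = map_pmf (apfst (ptrace qs)) \<Delta>0" by blast
  then show ?case by (auto simp: map_pmf_apfst_map_pmf_proc intro: ostep.o_l)
next
  case (o_r \<pi> t R2 \<alpha> \<Delta> R1)
  then obtain \<Delta>0 where "ostep \<pi> s R2 \<alpha> \<Delta>0" "\<Delta> = map_pmf (apfst (ptrace qs)) \<Delta>0" by blast
  then show ?case by (auto simp: map_pmf_apfst_map_pmf_proc intro: ostep.o_r)
qed

section \<open>Structurally congruent processes have the same transitions\<close>

definition state_scong :: "qst \<times> proc \<Rightarrow> qst \<times> proc \<Rightarrow> bool" where
  "state_scong x y \<longleftrightarrow> fst x = fst y \<and> snd x \<equiv>\<^sub>s snd y"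

definition plts_sim :: "proc \<Rightarrow> proc \<Rightarrow> bool" where
  "plts_sim P Q \<longleftrightarrow>
     (\<forall>s \<alpha> \<Delta>. plts s P \<alpha> \<Delta> \<longrightarrow> (\<exists>\<Delta>'. plts s Q \<alpha> \<Delta>' \<and> rel_pmf state_scong \<Delta> \<Delta>'))"

lemma plts_simI:
  "(\<And>s \<alpha> \<Delta>. plts s P \<alpha> \<Delta> \<Longrightarrow> \<exists>\<Delta>'. plts s Q \<alpha> \<Delta>' \<and> rel_pmf state_scong \<Delta> \<Delta>') \<Longrightarrow> plts_sim P Q"
  by (auto simp: plts_sim_def)

lemma plts_simD:
  "plts_sim P Q \<Longrightarrow> plts s P \<alpha> \<Delta> \<Longrightarrow> \<exists>\<Delta>'. plts s Q \<alpha> \<Delta>' \<and> rel_pmf state_scong \<Delta> \<Delta>'"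
  unfolding plts_sim_def by blast

lemma rel_pmf_state_scong_refl: "rel_pmf state_scong \<Delta> \<Delta>"
  by (rule rel_pmf_reflI) (simp add: state_scong_def sc_refl)

lemma rel_pmf_state_scong_trans:
  assumes "rel_pmf state_scong \<Delta>1 \<Delta>2" "rel_pmf state_scong \<Delta>2 \<Delta>3"
  shows "rel_pmf state_scong \<Delta>1 \<Delta>3"
proof -
  have "rel_pmf (state_scong OO state_scong) \<Delta>1 \<Delta>3" using assms by (auto simp: pmf.rel_compp)
  then show ?thesis by (rule pmf.rel_mono_strong) (auto simp: state_scong_def intro: sc_trans)
qed

lemma rel_pmf_state_scong_return: "P \<equiv>\<^sub>s Q \<Longrightarrow> rel_pmf state_scong (return_pmf (s, P)) (return_pmf (s, Q))"
  by (simp add: state_scong_def)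

lemma rel_pmf_state_scong_map:
  assumes "rel_pmf state_scong \<Delta> \<Delta>'" "\<And>X X'. X \<equiv>\<^sub>s X' \<Longrightarrow> h X \<equiv>\<^sub>s h' X'"
  shows "rel_pmf state_scong (map_pmf (\<lambda>(s', P'). (s', h P')) \<Delta>) (map_pmf (\<lambda>(s', P'). (s', h' P')) \<Delta>')"
  unfolding pmf.rel_map using assms(1)
  by (rule pmf.rel_mono_strong) (auto simp: state_scong_def assms(2) split: prod.splits)

lemma rel_pmf_state_scong_map_same:
  assumes "\<And>s X. (s, X) \<in> set_pmf \<Delta> \<Longrightarrow> h X \<equiv>\<^sub>s h' X"
  shows "rel_pmf state_scong (map_pmf (\<lambda>(s', P'). (s', h P')) \<Delta>) (map_pmf (\<lambda>(s', P'). (s', h' P')) \<Delta>)"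
  unfolding pmf.rel_map by (rule rel_pmf_reflI) (auto simp: state_scong_def assms split: prod.splits)

lemma map_pmf_proc_comp:
  "map_pmf (\<lambda>(s', P'). (s', f P')) (map_pmf (\<lambda>(s', P'). (s', g P')) \<Delta>)
     = map_pmf (\<lambda>(s', P'). (s', f (g P'))) \<Delta>"
  by (simp add: pmf.map_comp comp_def case_prod_unfold)

lemma map_pmf_proc_id: "map_pmf (\<lambda>(s', P'). (s', P')) \<Delta> = \<Delta>"
  by (simp add: case_prod_unfold)

lemma plts_sim_refl: "plts_sim P P"
  by (auto simp: plts_sim_def intro: rel_pmf_state_scong_refl)

lemma plts_sim_trans: "plts_sim P Q \<Longrightarrow> plts_sim Q R \<Longrightarrow> plts_sim P R"
  unfolding plts_sim_def by (meson rel_pmf_state_scong_trans)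

lemma plts_sim_visible:
  assumes "plts_sim P P'" "plts s P \<alpha> (return_pmf (s, P1))" "\<alpha> \<noteq> TauA"
  shows "\<exists>P1'. plts s P' \<alpha> (return_pmf (s, P1')) \<and> P1 \<equiv>\<^sub>s P1'"
proof -
  obtain \<Delta>' where "plts s P' \<alpha> \<Delta>'" "rel_pmf state_scong (return_pmf (s, P1)) \<Delta>'"
    using plts_simD[OF assms(1,2)] by blast
  then show ?thesis using plts_visible[OF _ assms(3)] by (fastforce simp: state_scong_def)
qed

lemma plts_sim_vacuous: "(\<And>s \<alpha> \<Delta>. \<not> plts s P \<alpha> \<Delta>) \<Longrightarrow> plts_sim P Q"
  by (auto simp: plts_sim_def)

lemma scong_subst: "P \<equiv>\<^sub>s Q \<Longrightarrow> subst x v P \<equiv>\<^sub>s subst x v Q"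
proof (induction rule: scong.induct)
  case (sc_sym P Q) then show ?case by (blast intro: scong.sc_sym)
next
  case (sc_trans P Q R) then show ?case by (blast intro: scong.sc_trans)
qed (simp_all add: scong_congs scong_axioms)

lemma plts_sim_Out: "P \<equiv>\<^sub>s Q \<Longrightarrow> plts_sim (Out c e P) (Out c e Q)"
  by (rule plts_simI, erule plts_OutE) (blast intro: plts.intros rel_pmf_state_scong_return)

lemma plts_sim_Inp: "P \<equiv>\<^sub>s Q \<Longrightarrow> plts_sim (Inp c x P) (Inp c x Q)"
  by (rule plts_simI, erule plts_InpE)
    (blast intro: plts.intros rel_pmf_state_scong_return scong_subst)

lemma plts_sim_Tau: "P \<equiv>\<^sub>s Q \<Longrightarrow> plts_sim (Tau P) (Tau Q)"
  by (rule plts_simI, erule plts_TauE) (blast intro: plts.intros rel_pmf_state_scong_return)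

lemma plts_sim_SOp: "P \<equiv>\<^sub>s Q \<Longrightarrow> plts_sim (SOp K es P) (SOp K es Q)"
  by (rule plts_simI, erule plts_SOpE) (blast intro: plts.intros rel_pmf_state_scong_return)

lemma plts_sim_Meas:
  assumes "P \<equiv>\<^sub>s Q"
  shows "plts_sim (Meas M es y P) (Meas M es y Q)"
proof (rule plts_simI)
  fix s \<alpha> \<Delta> assume "plts s (Meas M es y P) \<alpha> \<Delta>"
  then show "\<exists>\<Delta>'. plts s (Meas M es y Q) \<alpha> \<Delta>' \<and> rel_pmf state_scong \<Delta> \<Delta>'"
  proof (rule plts_MeasE)
    fix xs assume h: "\<alpha> = TauA" "\<Delta> = meas_dist M xs y P s" "es = qargs xs" "distinct xs"
      "set xs \<subseteq> fst s" "\<forall>m<length M. 0 \<le> meas_prob M xs s m" "(\<Sum>m<length M. meas_prob M xs s m) = 1"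
    have "rel_pmf state_scong (meas_dist M xs y P s) (meas_dist M xs y Q s)"
      unfolding meas_dist_eq_map_pmf[OF h(6,7)] pmf.rel_map
      by (rule rel_pmf_reflI) (simp add: state_scong_def scong_subst[OF assms])
    then show ?thesis using h by (blast intro: plts.p_meas)
  qed
qed

lemma plts_sim_Sum: "plts_sim P P' \<Longrightarrow> plts_sim Q Q' \<Longrightarrow> plts_sim (Sum P Q) (Sum P' Q')"
  by (rule plts_simI, erule plts_SumE) (blast dest: plts_simD intro: plts.intros)+

lemma plts_sim_If: "plts_sim P P' \<Longrightarrow> plts_sim Q Q' \<Longrightarrow> plts_sim (If b P Q) (If b P' Q')"
  by (rule plts_simI, erule plts_IfE) (blast dest: plts_simD intro: plts.intros)+

lemma plts_sim_Par:
  assumes "P \<equiv>\<^sub>s P'" "Q \<equiv>\<^sub>s Q'" "plts_sim P P'" "plts_sim Q Q'"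
  shows "plts_sim (Par P Q) (Par P' Q')"
proof (rule plts_simI)
  fix s \<alpha> \<Delta> assume "plts s (Par P Q) \<alpha> \<Delta>"
  then show "\<exists>\<Delta>'. plts s (Par P' Q') \<alpha> \<Delta>' \<and> rel_pmf state_scong \<Delta> \<Delta>'"
  proof (cases rule: plts_ParE)
    case (left \<Delta>1)
    obtain \<Delta>2 where "plts s P' \<alpha> \<Delta>2" "rel_pmf state_scong \<Delta>1 \<Delta>2"
      using plts_simD[OF assms(3) left(1)] by blast
    moreover from this(2) have "rel_pmf state_scong \<Delta>
        (map_pmf (\<lambda>(s', X). (s', Par X Q')) \<Delta>2)"
      unfolding left(2) by (rule rel_pmf_state_scong_map) (rule sc_par[OF _ assms(2)])
    ultimately show ?thesis by (blast intro: plts.p_parl)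
  next
    case (right \<Delta>1)
    obtain \<Delta>2 where "plts s Q' \<alpha> \<Delta>2" "rel_pmf state_scong \<Delta>1 \<Delta>2"
      using plts_simD[OF assms(4) right(1)] by blast
    moreover from this(2) have "rel_pmf state_scong \<Delta>
        (map_pmf (\<lambda>(s', X). (s', Par P' X)) \<Delta>2)"
      unfolding right(2) by (rule rel_pmf_state_scong_map) (rule sc_par[OF assms(1)])
    ultimately show ?thesis by (blast intro: plts.p_parr)
  next
    case (comm \<beta> \<gamma> P1 Q1)
    obtain P2 where "plts s P' \<beta> (return_pmf (s, P2))" "P1 \<equiv>\<^sub>s P2"
      using plts_sim_visible[OF assms(3) comm(4)] dual_visible[OF comm(1)] by blast
    moreover obtain Q2 where "plts s Q' \<gamma> (return_pmf (s, Q2))" "Q1 \<equiv>\<^sub>s Q2"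
      using plts_sim_visible[OF assms(4) comm(5)] dual_visible[OF comm(1)] by blast
    ultimately show ?thesis
      using comm by (blast intro: plts_comm rel_pmf_state_scong_return sc_par)
  qed
qed

lemma plts_sim_Res:
  assumes "P \<equiv>\<^sub>s P'" "plts_sim P P'"
  shows "plts_sim (Res c P) (Res c P')"
proof (rule plts_simI)
  fix s \<alpha> \<Delta> assume "plts s (Res c P) \<alpha> \<Delta>"
  then show "\<exists>\<Delta>'. plts s (Res c P') \<alpha> \<Delta>' \<and> rel_pmf state_scong \<Delta> \<Delta>'"
  proof (rule plts_ResE)
    fix \<Delta>1 assume h: "\<Delta> = map_pmf (\<lambda>(s', X). (s', Res c X)) \<Delta>1" "plts s P \<alpha> \<Delta>1" "chan_of \<alpha> \<noteq> Some c"
    obtain \<Delta>2 where "plts s P' \<alpha> \<Delta>2" "rel_pmf state_scong \<Delta>1 \<Delta>2"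
      using plts_simD[OF assms(2) h(2)] by blast
    moreover from this(2) have "rel_pmf state_scong \<Delta> (map_pmf (\<lambda>(s', X). (s', Res c X)) \<Delta>2)"
      unfolding h(1) by (rule rel_pmf_state_scong_map) (rule sc_res)
    ultimately show ?thesis using h(3) by (blast intro: plts.p_res)
  qed
qed

lemma plts_sim_Par_Nil: "plts_sim (Par P Nil) P"
proof (rule plts_simI)
  fix s \<alpha> \<Delta> assume "plts s (Par P Nil) \<alpha> \<Delta>"
  then show "\<exists>\<Delta>'. plts s P \<alpha> \<Delta>' \<and> rel_pmf state_scong \<Delta> \<Delta>'"
  proof (cases rule: plts_ParE)
    case (left \<Delta>1)
    have "rel_pmf state_scong \<Delta> (map_pmf (\<lambda>(s', X). (s', X)) \<Delta>1)"
      unfolding left(2) by (rule rel_pmf_state_scong_map_same) (rule sc_par_nil)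
    then show ?thesis using left(1) by (auto simp: map_pmf_proc_id)
  qed simp_all
qed

lemma plts_sim_Par_Nil_inv: "plts_sim P (Par P Nil)"
proof (rule plts_simI)
  fix s \<alpha> \<Delta> assume "plts s P \<alpha> \<Delta>"
  moreover have "rel_pmf state_scong (map_pmf (\<lambda>(s', X). (s', X)) \<Delta>) (map_pmf (\<lambda>(s', X). (s', Par X Nil)) \<Delta>)"
    by (rule rel_pmf_state_scong_map_same) (rule sc_sym, rule sc_par_nil)
  ultimately show "\<exists>\<Delta>'. plts s (Par P Nil) \<alpha> \<Delta>' \<and> rel_pmf state_scong \<Delta> \<Delta>'"
    by (auto simp: map_pmf_proc_id intro: plts.p_parl)
qed

lemma plts_sim_Par_comm: "plts_sim (Par P Q) (Par Q P)"
proof (rule plts_simI)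
  fix s \<alpha> \<Delta> assume "plts s (Par P Q) \<alpha> \<Delta>"
  then show "\<exists>\<Delta>'. plts s (Par Q P) \<alpha> \<Delta>' \<and> rel_pmf state_scong \<Delta> \<Delta>'"
  proof (cases rule: plts_ParE)
    case (left \<Delta>1)
    have "rel_pmf state_scong \<Delta> (map_pmf (\<lambda>(s', X). (s', Par Q X)) \<Delta>1)"
      unfolding left(2) by (rule rel_pmf_state_scong_map_same) (rule sc_par_comm)
    then show ?thesis using left(1) by (blast intro: plts.p_parr)
  next
    case (right \<Delta>1)
    have "rel_pmf state_scong \<Delta> (map_pmf (\<lambda>(s', X). (s', Par X P)) \<Delta>1)"
      unfolding right(2) by (rule rel_pmf_state_scong_map_same) (rule sc_par_comm)
    then show ?thesis using right(1) by (blast intro: plts.p_parl)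
  next
    case (comm \<beta> \<gamma> P1 Q1)
    then show ?thesis by (blast intro: plts_comm dual_sym rel_pmf_state_scong_return sc_par_comm)
  qed
qed

lemma plts_Par_assoc_left:
  assumes "plts s (Par P Q) \<alpha> \<Delta>"
  shows "\<exists>\<Delta>'. plts s (Par P (Par Q R)) \<alpha> \<Delta>' \<and>
    rel_pmf state_scong (map_pmf (\<lambda>(s', X). (s', Par X R)) \<Delta>) \<Delta>'"
  using assms
proof (cases rule: plts_ParE)
  case (left \<Delta>1)
  have "rel_pmf state_scong (map_pmf (\<lambda>(s', X). (s', Par (Par X Q) R)) \<Delta>1)
      (map_pmf (\<lambda>(s', X). (s', Par X (Par Q R))) \<Delta>1)"
    by (rule rel_pmf_state_scong_map_same) (rule sc_par_assoc)
  then show ?thesis using left by (auto simp: map_pmf_proc_comp intro: plts.p_parl)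
next
  case (right \<Delta>1)
  have "plts s (Par P (Par Q R)) \<alpha>
      (map_pmf (\<lambda>(s', X). (s', Par P X)) (map_pmf (\<lambda>(s', X). (s', Par X R)) \<Delta>1))"
    using right(1) by (intro plts.p_parr plts.p_parl)
  moreover have "rel_pmf state_scong (map_pmf (\<lambda>(s', X). (s', Par (Par P X) R)) \<Delta>1)
      (map_pmf (\<lambda>(s', X). (s', Par P (Par X R))) \<Delta>1)"
    by (rule rel_pmf_state_scong_map_same) (rule sc_par_assoc)
  ultimately show ?thesis using right(2) by (auto simp: map_pmf_proc_comp)
next
  case (comm \<beta> \<gamma> P1 Q1)
  then have "plts s (Par P (Par Q R)) TauA (return_pmf (s, Par P1 (Par Q1 R)))"
    by (blast intro: plts_comm plts_Par_left_return)
  then show ?thesis using comm by (auto intro: rel_pmf_state_scong_return sc_par_assoc)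
qed

lemma plts_Par_assoc_comm:
  assumes "dual \<beta> \<gamma>" "plts s (Par P Q) \<beta> (return_pmf (s, X))" "plts s R \<gamma> (return_pmf (s, R1))"
  shows "\<exists>Y. plts s (Par P (Par Q R)) TauA (return_pmf (s, Y)) \<and> Par X R1 \<equiv>\<^sub>s Y"
  using plts_Par_visible[OF assms(2) conjunct1[OF dual_visible[OF assms(1)]]]
proof (elim disjE exE conjE)
  fix P1 assume "plts s P \<beta> (return_pmf (s, P1))" "X = Par P1 Q"
  then show ?thesis
    using assms by (blast intro: plts_comm plts_Par_right_return sc_par_assoc)
next
  fix Q1 assume "plts s Q \<beta> (return_pmf (s, Q1))" "X = Par P Q1"
  then show ?thesis
    using assms by (blast intro: plts_comm plts_Par_right_return sc_par_assoc)
qed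

lemma plts_sim_Par_assoc: "plts_sim (Par (Par P Q) R) (Par P (Par Q R))"
proof (rule plts_simI)
  fix s \<alpha> \<Delta> assume "plts s (Par (Par P Q) R) \<alpha> \<Delta>"
  then show "\<exists>\<Delta>'. plts s (Par P (Par Q R)) \<alpha> \<Delta>' \<and> rel_pmf state_scong \<Delta> \<Delta>'"
  proof (cases rule: plts_ParE)
    case (left \<Delta>1)
    then show ?thesis using plts_Par_assoc_left by blast
  next
    case (right \<Delta>1)
    have "plts s (Par P (Par Q R)) \<alpha>
        (map_pmf (\<lambda>(s', X). (s', Par P X)) (map_pmf (\<lambda>(s', X). (s', Par Q X)) \<Delta>1))"
      using right(1) by (intro plts.p_parr)
    moreover have "rel_pmf state_scong (map_pmf (\<lambda>(s', X). (s', Par (Par P Q) X)) \<Delta>1)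
        (map_pmf (\<lambda>(s', X). (s', Par P (Par Q X))) \<Delta>1)"
      by (rule rel_pmf_state_scong_map_same) (rule sc_par_assoc)
    ultimately show ?thesis using right(2) by (auto simp: map_pmf_proc_comp)
  next
    case (comm \<beta> \<gamma> X R1)
    then show ?thesis using plts_Par_assoc_comm[OF comm(1,4,5)]
      by (auto intro: rel_pmf_state_scong_return)
  qed
qed

lemma plts_sim_Sum_Nil: "plts_sim (Sum P Nil) P"
  by (rule plts_simI, erule plts_SumE) (auto intro: rel_pmf_state_scong_refl)

lemma plts_sim_Sum_Nil_inv: "plts_sim P (Sum P Nil)"
  by (rule plts_simI) (blast intro: plts.p_suml rel_pmf_state_scong_refl)

lemma plts_sim_Sum_comm: "plts_sim (Sum P Q) (Sum Q P)"
  by (rule plts_simI, erule plts_SumE)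
    (blast intro: plts.p_suml plts.p_sumr rel_pmf_state_scong_refl)+

lemma plts_sim_Sum_assoc: "plts_sim (Sum (Sum P Q) R) (Sum P (Sum Q R))"
  by (rule plts_simI, erule plts_SumE, erule plts_SumE)
    (blast intro: plts.p_suml plts.p_sumr rel_pmf_state_scong_refl)+

lemma plts_sim_Res_swap: "plts_sim (Res c (Res d P)) (Res d (Res c P))"
proof (rule plts_simI)
  fix s \<alpha> \<Delta> assume "plts s (Res c (Res d P)) \<alpha> \<Delta>"
  then show "\<exists>\<Delta>'. plts s (Res d (Res c P)) \<alpha> \<Delta>' \<and> rel_pmf state_scong \<Delta> \<Delta>'"
  proof (elim plts_ResE)
    fix \<Delta>1 \<Delta>2
    assume h: "\<Delta> = map_pmf (\<lambda>(s', X). (s', Res c X)) \<Delta>1" "chan_of \<alpha> \<noteq> Some c"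
      "\<Delta>1 = map_pmf (\<lambda>(s', X). (s', Res d X)) \<Delta>2" "plts s P \<alpha> \<Delta>2" "chan_of \<alpha> \<noteq> Some d"
    have "plts s (Res d (Res c P)) \<alpha>
        (map_pmf (\<lambda>(s', X). (s', Res d X)) (map_pmf (\<lambda>(s', X). (s', Res c X)) \<Delta>2))"
      using h by (intro plts.p_res)
    moreover have "rel_pmf state_scong (map_pmf (\<lambda>(s', X). (s', Res c (Res d X))) \<Delta>2)
        (map_pmf (\<lambda>(s', X). (s', Res d (Res c X))) \<Delta>2)"
      by (rule rel_pmf_state_scong_map_same) (rule sc_res_swap)
    ultimately show ?thesis using h by (auto simp: map_pmf_proc_comp)
  qed
qed

lemma plts_sim_Par_Res:
  assumes c: "c \<notin> fn P"
  shows "plts_sim (Par P (Res c Q)) (Res c (Par P Q))"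
proof (rule plts_simI)
  fix s \<alpha> \<Delta> assume "plts s (Par P (Res c Q)) \<alpha> \<Delta>"
  then show "\<exists>\<Delta>'. plts s (Res c (Par P Q)) \<alpha> \<Delta>' \<and> rel_pmf state_scong \<Delta> \<Delta>'"
  proof (cases rule: plts_ParE)
    case (left \<Delta>1)
    have "plts s (Res c (Par P Q)) \<alpha>
        (map_pmf (\<lambda>(s', X). (s', Res c X)) (map_pmf (\<lambda>(s', X). (s', Par X Q)) \<Delta>1))"
      using left(1) plts_chan_fn[OF left(1)] c by (intro plts.p_res plts.p_parl) auto
    moreover have "rel_pmf state_scong \<Delta> (map_pmf (\<lambda>(s', X). (s', Res c (Par X Q))) \<Delta>1)"
      unfolding left(2) by (rule rel_pmf_state_scong_map_same)
        (rule sc_res_extr, rule plts_derivative_fn[OF left(1) _ c])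
    ultimately show ?thesis by (auto simp: map_pmf_proc_comp)
  next
    case (right \<Delta>1)
    from right(1) show ?thesis
    proof (rule plts_ResE)
      fix \<Delta>2 assume h: "\<Delta>1 = map_pmf (\<lambda>(s', X). (s', Res c X)) \<Delta>2" "plts s Q \<alpha> \<Delta>2" "chan_of \<alpha> \<noteq> Some c"
      have "plts s (Res c (Par P Q)) \<alpha>
          (map_pmf (\<lambda>(s', X). (s', Res c X)) (map_pmf (\<lambda>(s', X). (s', Par P X)) \<Delta>2))"
        using h by (intro plts.p_res plts.p_parr)
      moreover have "rel_pmf state_scong (map_pmf (\<lambda>(s', X). (s', Par P (Res c X))) \<Delta>2)
          (map_pmf (\<lambda>(s', X). (s', Res c (Par P X))) \<Delta>2)"
        by (rule rel_pmf_state_scong_map_same) (rule sc_res_extr[OF c])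
      ultimately show ?thesis using right(2) h(1) by (auto simp: map_pmf_proc_comp)
    qed
  next
    case (comm \<beta> \<gamma> P1 Y)
    obtain Q1 where q: "plts s Q \<gamma> (return_pmf (s, Q1))" "Y = Res c Q1"
      using plts_Res_visible[OF comm(5)] dual_visible[OF comm(1)] by blast
    have "plts s (Res c (Par P Q)) TauA (return_pmf (s, Res c (Par P1 Q1)))"
      using comm q by (intro plts_Res_return plts_comm) simp_all
    moreover have "c \<notin> fn P1" using plts_derivative_fn[OF comm(4) _ c] by simp
    ultimately show ?thesis
      using comm q by (blast intro: rel_pmf_state_scong_return sc_res_extr)
  qed
qed

lemma plts_sim_Res_Par:
  assumes c: "c \<notin> fn P"
  shows "plts_sim (Res c (Par P Q)) (Par P (Res c Q))"
proof (rule plts_simI)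
  fix s \<alpha> \<Delta> assume "plts s (Res c (Par P Q)) \<alpha> \<Delta>"
  then show "\<exists>\<Delta>'. plts s (Par P (Res c Q)) \<alpha> \<Delta>' \<and> rel_pmf state_scong \<Delta> \<Delta>'"
  proof (rule plts_ResE)
    fix \<Delta>1 assume h: "\<Delta> = map_pmf (\<lambda>(s', X). (s', Res c X)) \<Delta>1" "plts s (Par P Q) \<alpha> \<Delta>1"
      "chan_of \<alpha> \<noteq> Some c"
    from h(2) show ?thesis
    proof (cases rule: plts_ParE)
      case (left \<Delta>2)
      have "rel_pmf state_scong (map_pmf (\<lambda>(s', X). (s', Res c (Par X Q))) \<Delta>2)
          (map_pmf (\<lambda>(s', X). (s', Par X (Res c Q))) \<Delta>2)"
        by (rule rel_pmf_state_scong_map_same)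
          (rule sc_sym, rule sc_res_extr, rule plts_derivative_fn[OF left(1) _ c])
      then show ?thesis using h(1) left by (auto simp: map_pmf_proc_comp intro: plts.p_parl)
    next
      case (right \<Delta>2)
      have "plts s (Par P (Res c Q)) \<alpha>
          (map_pmf (\<lambda>(s', X). (s', Par P X)) (map_pmf (\<lambda>(s', X). (s', Res c X)) \<Delta>2))"
        using right(1) h(3) by (intro plts.p_parr plts.p_res)
      moreover have "rel_pmf state_scong (map_pmf (\<lambda>(s', X). (s', Res c (Par P X))) \<Delta>2)
          (map_pmf (\<lambda>(s', X). (s', Par P (Res c X))) \<Delta>2)"
        by (rule rel_pmf_state_scong_map_same) (rule sc_sym, rule sc_res_extr[OF c])
      ultimately show ?thesis using h(1) right(2) by (auto simp: map_pmf_proc_comp)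
    next
      case (comm \<beta> \<gamma> P1 Q1)
      have "chan_of \<gamma> \<noteq> Some c"
        using plts_chan_fn[OF comm(4)] c dual_chan_of[OF comm(1)] by auto
      then have "plts s (Par P (Res c Q)) TauA (return_pmf (s, Par P1 (Res c Q1)))"
        using comm by (intro plts_comm[OF comm(1)] plts_Res_return) simp_all
      moreover have "c \<notin> fn P1" using plts_derivative_fn[OF comm(4) _ c] by simp
      then have "rel_pmf state_scong \<Delta> (return_pmf (s, Par P1 (Res c Q1)))"
        using h(1) comm(3) rel_pmf_state_scong_return[OF sc_sym[OF sc_res_extr]] by simp
      ultimately show ?thesis using comm by blast
    qed
  qed
qed

theorem scong_plts_sim: "P \<equiv>\<^sub>s Q \<Longrightarrow> plts_sim P Q \<and> plts_sim Q P"
proof (induction rule: scong.induct)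
  case (sc_trans P Q R) then show ?case by (blast intro: plts_sim_trans)
next
  case (sc_sum P P' Q Q') then show ?case by (blast intro: plts_sim_Sum)
next
  case (sc_par P P' Q Q') then show ?case by (blast intro: plts_sim_Par sc_sym)
next
  case (sc_res P Q c) then show ?case by (blast intro: plts_sim_Res sc_sym)
next
  case (sc_if P P' Q Q' b) then show ?case by (blast intro: plts_sim_If)
next
  case (sc_par_assoc P Q R)
  then show ?case by (meson plts_sim_trans plts_sim_Par_comm plts_sim_Par_assoc)
next
  case (sc_res_nil c)
  have "\<not> plts s (Res c Nil) \<alpha> \<Delta>" for s \<alpha> \<Delta> by (auto elim: plts_ResE)
  then show ?case by (simp add: plts_sim_vacuous)
next
  case (sc_discard_app xs ys)
  have "\<not> plts s (Par (Discard xs) (Discard ys)) \<alpha> \<Delta>" for s \<alpha> \<Delta> by (auto elim: plts_ParE)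
  then show ?case by (simp add: plts_sim_vacuous)
next
  case (sc_sum_assoc P Q R)
  then show ?case by (meson plts_sim_trans plts_sim_Sum_comm plts_sim_Sum_assoc)
qed (auto intro: plts_sim_refl plts_sim_Out plts_sim_Inp plts_sim_Tau plts_sim_SOp plts_sim_Meas
    plts_sim_Par_Nil plts_sim_Par_Nil_inv plts_sim_Par_comm plts_sim_Sum_Nil plts_sim_Sum_Nil_inv
    plts_sim_Sum_comm plts_sim_Res_swap plts_sim_Par_Res plts_sim_Res_Par sc_sym plts_sim_vacuous)

lemma plts_scong:
  "P \<equiv>\<^sub>s Q \<Longrightarrow> plts s P \<alpha> \<Delta> \<Longrightarrow> \<exists>\<Delta>'. plts s Q \<alpha> \<Delta>' \<and> rel_pmf state_scong \<Delta> \<Delta>'"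
  using scong_plts_sim plts_simD by blast

section \<open>Tracing out discarded qubits of a configuration\<close>

lemma confeq_refl: "confeq C C"
  by (cases C) (auto intro: sc_refl)

lemma confeq_sym: "confeq C C' \<Longrightarrow> confeq C' C"
  by (cases C; cases C') (auto intro: sc_sym)

lemma confeq_trans: "confeq C C' \<Longrightarrow> confeq C' C'' \<Longrightarrow> confeq C C''"
  by (cases C; cases C'; cases C'') (auto intro: sc_trans)

lemma rel_pmf_confeq_refl: "rel_pmf confeq \<Theta> \<Theta>"
  by (rule rel_pmf_reflI) (rule confeq_refl)

lemma rel_pmf_confeq_sym: "rel_pmf confeq \<Theta> \<Theta>' \<Longrightarrow> rel_pmf confeq \<Theta>' \<Theta>"
  by (subst pmf.rel_flip[symmetric]) (erule pmf.rel_mono_strong, simp add: confeq_sym)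

lemma rel_pmf_confeq_trans:
  assumes "rel_pmf confeq \<Theta>1 \<Theta>2" "rel_pmf confeq \<Theta>2 \<Theta>3"
  shows "rel_pmf confeq \<Theta>1 \<Theta>3"
proof -
  have "rel_pmf (confeq OO confeq) \<Theta>1 \<Theta>3" using assms by (auto simp: pmf.rel_compp)
  then show ?thesis by (rule pmf.rel_mono_strong) (auto intro: confeq_trans)
qed

lemma confeq_Conf_iff: "confeq (Conf s P R) C \<longleftrightarrow> (\<exists>P'. C = Conf s P' R \<and> P \<equiv>\<^sub>s P')"
  by (cases C) auto

lemma rel_pmf_mapI:
  assumes "rel_pmf S p q" "\<And>x y. x \<in> set_pmf p \<Longrightarrow> y \<in> set_pmf q \<Longrightarrow> S x y \<Longrightarrow> T (f x) (g y)"
  shows "rel_pmf T (map_pmf f p) (map_pmf g q)"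
  unfolding pmf.rel_map using assms(1) by (rule pmf.rel_mono_strong) (use assms(2) in auto)

lemma rel_pmf_map_sameI:
  assumes "\<And>x. x \<in> set_pmf p \<Longrightarrow> T (f x) (g x)"
  shows "rel_pmf T (map_pmf f p) (map_pmf g p)"
  unfolding pmf.rel_map by (rule rel_pmf_reflI) (use assms in auto)

lemma esem_not_Bot: "esem C \<pi> \<Theta> \<Longrightarrow> C \<noteq> Bot"
proof (induction rule: esem.induct)
  case (e_cong C C' \<pi> \<Theta>' \<Theta>)
  then show ?case by (cases C; cases C') auto
qed auto

lemma esem_rel_pmf_confeq: "esem C \<pi> \<Theta> \<Longrightarrow> rel_pmf confeq \<Theta> \<Theta>' \<Longrightarrow> esem C \<pi> \<Theta>'"
  by (rule e_cong[OF confeq_refl])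

lemma esem_confeq: "confeq C C' \<Longrightarrow> esem C' \<pi> \<Theta> \<Longrightarrow> esem C \<pi> \<Theta>"
  by (rule e_cong[OF _ _ rel_pmf_confeq_refl])

lemma esem_obs_comm:
  assumes "dual \<alpha> \<beta>" "ostep \<pi> s R \<alpha> (return_pmf (s, R'))" "plts s P \<beta> (return_pmf (s, P'))"
  shows "esem (Conf s P R) (Path \<pi>) (return_pmf (Conf s P' R'))"
  using assms by (auto simp: dual_def intro: e_obs_out e_obs_in)

lemma obs_comm_qbits:
  assumes "dual \<alpha> \<beta>" "ostep \<pi> s R \<alpha> (return_pmf (s, R'))" "plts s A \<beta> (return_pmf (s, A'))"
  shows "qbits A' \<subseteq> qbits A \<union> qbits R"
proof -
  have "act_qbits \<beta> \<subseteq> qbits R"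
    using assms(1,2) ostep_OutA_qbits[of \<pi> s R] by (auto simp: dual_def) blast
  then show ?thesis using plts_derivative[OF assms(3), of s A'] by auto
qed

definition discards_disjointly :: "qubit list \<Rightarrow> conf \<Rightarrow> bool" where
  "discards_disjointly qs C \<longleftrightarrow>
     (\<exists>s P R A. C = Conf s P R \<and> P \<equiv>\<^sub>s Par A (discarding qs) \<and> qbits A \<inter> set qs = {})"

lemma discards_disjointly_Par_discarding:
  "qbits A \<inter> set qs = {} \<Longrightarrow> discards_disjointly qs (Conf s (Par A (discarding qs)) R)"
  by (auto simp: discards_disjointly_def intro: sc_refl)

lemma discards_disjointly_discards: "discards_disjointly qs C \<Longrightarrow> discards qs C"
  by (auto simp: discards_disjointly_def discards_def)

text \<open>\<^const>\<open>ctr\<close> picks the residual process by Hilbert choice; cancellation makes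
  the choice irrelevant up to congruence.\<close>
lemma confeq_ctr:
  assumes "P \<equiv>\<^sub>s Par A (discarding qs)" "qbits A \<inter> set qs = {}"
  shows "confeq (Conf (ptrace qs s) A R) (ctr qs (Conf s P R))"
proof -
  let ?Y = "SOME Y. P \<equiv>\<^sub>s Par Y (discarding qs)"
  have "P \<equiv>\<^sub>s Par ?Y (discarding qs)"
    by (rule someI[where P = "\<lambda>Y. P \<equiv>\<^sub>s Par Y (discarding qs)", OF assms(1)])
  then have "Par A (discarding qs) \<equiv>\<^sub>s Par ?Y (discarding qs)"
    by (rule sc_trans[OF sc_sym[OF assms(1)]])
  then show ?thesis using scong_Par_discarding_cancel[OF _ assms(2)] by simp
qed

lemma ctr_confeq:
  assumes "confeq C1 C2" "discards_disjointly qs C1"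
  shows "confeq (ctr qs C1) (ctr qs C2)" "discards_disjointly qs C2"
proof -
  obtain s P R A where C1: "C1 = Conf s P R" "P \<equiv>\<^sub>s Par A (discarding qs)" "qbits A \<inter> set qs = {}"
    using assms(2) by (auto simp: discards_disjointly_def)
  obtain P2 where "C2 = Conf s P2 R" "P \<equiv>\<^sub>s P2"
    using assms(1) C1(1) by (auto simp: confeq_Conf_iff)
  then have C2: "C2 = Conf s P2 R" "P2 \<equiv>\<^sub>s Par A (discarding qs)"
    using C1(2) by (auto intro: sc_trans sc_sym)
  show "discards_disjointly qs C2" using C1(3) C2 by (auto simp: discards_disjointly_def)
  show "confeq (ctr qs C1) (ctr qs C2)"
    using confeq_ctr[OF C1(2,3)] confeq_ctr[OF C2(2) C1(3)] C1(1) C2(1)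
    by (blast intro: confeq_trans confeq_sym)
qed

lemma plts_scong_Par_Discard:
  assumes "plts s P \<alpha> \<Delta>" "P \<equiv>\<^sub>s Par A (Discard es)"
  obtains \<Delta>1 where "plts s A \<alpha> \<Delta>1"
    "rel_pmf (\<lambda>x y. fst x = fst y \<and> snd x \<equiv>\<^sub>s Par (snd y) (Discard es)) \<Delta> \<Delta>1"
proof -
  obtain \<Delta>' where step: "plts s (Par A (Discard es)) \<alpha> \<Delta>'" and rel: "rel_pmf state_scong \<Delta> \<Delta>'"
    using plts_scong[OF assms(2,1)] by blast
  from step show ?thesis
  proof (cases rule: plts_ParE)
    case (left \<Delta>1)
    have "rel_pmf (\<lambda>x y. fst x = fst y \<and> snd x \<equiv>\<^sub>s Par (snd y) (Discard es)) \<Delta> \<Delta>1"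
      using rel unfolding left(2) pmf.rel_map by (simp add: state_scong_def case_prod_unfold)
    then show ?thesis using that left(1) by blast
  qed simp_all
qed

lemma esem_proc_ptrace:
  fixes R :: proc
  assumes "plts s P TauA \<Delta>" "P \<equiv>\<^sub>s Par A (discarding qs)" "qbits A \<inter> set qs = {}" "set qs \<subseteq> fst s"
  defines "\<Theta> \<equiv> map_pmf (\<lambda>(s', P'). Conf s' P' R) \<Delta>"
  shows "(\<forall>C\<in>set_pmf \<Theta>. discards_disjointly qs C) \<and>
    esem (Conf (ptrace qs s) A R) Diamond (map_pmf (ctr qs) \<Theta>)"
proof -
  obtain \<Delta>1 where A: "plts s A TauA \<Delta>1"
    and rel: "rel_pmf (\<lambda>x y. fst x = fst y \<and> snd x \<equiv>\<^sub>s Par (snd y) (discarding qs)) \<Delta> \<Delta>1"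
    using assms(1,2) by (rule plts_scong_Par_Discard)
  have disj: "qbits A' \<inter> set qs = {}" if "(s', A') \<in> set_pmf \<Delta>1" for s' A'
    using plts_derivative[OF A that] assms(3) by auto
  have "discards_disjointly qs C" if C: "C \<in> set_pmf \<Theta>" for C
  proof -
    obtain x where x: "x \<in> set_pmf \<Delta>" "C = Conf (fst x) (snd x) R"
      using C by (auto simp: \<Theta>_def case_prod_unfold)
    then obtain y where "y \<in> set_pmf \<Delta>1" "snd x \<equiv>\<^sub>s Par (snd y) (discarding qs)"
      using rel_pmf_imp_rel_set[OF rel] by (force simp: rel_set_def)
    then show ?thesis using disj[of "fst y" "snd y"] x(2) by (auto simp: discards_disjointly_def)
  qed
  moreover have "esem (Conf (ptrace qs s) A R) Diamond
      (map_pmf (\<lambda>(s', P'). Conf s' P' R) (map_pmf (apfst (ptrace qs)) \<Delta>1))"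
    by (rule e_proc, rule plts_ptrace[OF A assms(3,4)])
  moreover have "rel_pmf confeq (map_pmf (\<lambda>y. Conf (ptrace qs (fst y)) (snd y) R) \<Delta>1)
      (map_pmf (\<lambda>x. ctr qs (Conf (fst x) (snd x) R)) \<Delta>)"
  proof (rule rel_pmf_mapI[OF pmf.rel_flip[THEN iffD2, OF rel]])
    fix y x assume "y \<in> set_pmf \<Delta>1"
      "(\<lambda>x y. fst x = fst y \<and> snd x \<equiv>\<^sub>s Par (snd y) (discarding qs))\<inverse>\<inverse> y x"
    then show "confeq (Conf (ptrace qs (fst y)) (snd y) R) (ctr qs (Conf (fst x) (snd x) R))"
      using confeq_ctr[of "snd x" "snd y" qs "fst x" R] disj[of "fst y" "snd y"] by simp
  qed
  ultimately show ?thesis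
    by (auto simp: \<Theta>_def pmf.map_comp comp_def case_prod_unfold intro: esem_rel_pmf_confeq)
qed

lemma esem_obs_ptrace:
  assumes "ostep \<pi> s R TauA \<Delta>" "P \<equiv>\<^sub>s Par A (discarding qs)" "qbits A \<inter> set qs = {}"
    "qbits R \<inter> set qs = {}" "set qs \<subseteq> fst s"
  defines "\<Theta> \<equiv> map_pmf (\<lambda>(s', R'). Conf s' P R') \<Delta>"
  shows "(\<forall>C\<in>set_pmf \<Theta>. discards_disjointly qs C) \<and>
    esem (Conf (ptrace qs s) A R) (Path \<pi>) (map_pmf (ctr qs) \<Theta>)"
proof -
  have "\<forall>C\<in>set_pmf \<Theta>. discards_disjointly qs C"
    using assms(2,3) by (auto simp: \<Theta>_def discards_disjointly_def)
  moreover have "esem (Conf (ptrace qs s) A R) (Path \<pi>)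
      (map_pmf (\<lambda>(s', R'). Conf s' A R') (map_pmf (apfst (ptrace qs)) \<Delta>))"
    by (rule e_obs, rule ostep_ptrace[OF assms(1,4,5)])
  moreover have "rel_pmf confeq (map_pmf (\<lambda>y. Conf (ptrace qs (fst y)) A (snd y)) \<Delta>)
      (map_pmf (\<lambda>y. ctr qs (Conf (fst y) P (snd y))) \<Delta>)"
    by (rule rel_pmf_map_sameI) (rule confeq_ctr[OF assms(2,3)])
  ultimately show ?thesis
    by (auto simp: \<Theta>_def pmf.map_comp comp_def case_prod_unfold intro: esem_rel_pmf_confeq)
qed

lemma esem_comm_ptrace:
  assumes "dual \<alpha> \<beta>" "ostep \<pi> s R \<alpha> (return_pmf (s, R'))" "plts s P \<beta> (return_pmf (s, P'))"
    "P \<equiv>\<^sub>s Par A (discarding qs)" "qbits A \<inter> set qs = {}" "qbits R \<inter> set qs = {}"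
  shows "discards_disjointly qs (Conf s P' R') \<and>
    esem (Conf (ptrace qs s) A R) (Path \<pi>) (return_pmf (ctr qs (Conf s P' R')))"
proof -
  have vis: "\<alpha> \<noteq> TauA" "\<beta> \<noteq> TauA" using dual_visible[OF assms(1)] by simp_all
  obtain \<Delta>1 where A: "plts s A \<beta> \<Delta>1"
    and rel: "rel_pmf (\<lambda>x y. fst x = fst y \<and> snd x \<equiv>\<^sub>s Par (snd y) (discarding qs)) (return_pmf (s, P')) \<Delta>1"
    using assms(3,4) by (rule plts_scong_Par_Discard)
  obtain A' where "\<Delta>1 = return_pmf (s, A')" using plts_visible[OF A vis(2)] by blast
  with A rel have A': "plts s A \<beta> (return_pmf (s, A'))" "P' \<equiv>\<^sub>s Par A' (discarding qs)" by auto
  have disj: "qbits A' \<inter> set qs = {}"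
    using obs_comm_qbits[OF assms(1,2) A'(1)] assms(5,6) by blast
  have "esem (Conf (ptrace qs s) A R) (Path \<pi>) (return_pmf (Conf (ptrace qs s) A' R'))"
    by (rule esem_obs_comm[OF assms(1) ostep_visible_any_state[OF assms(2) vis(1)]
          plts_visible_any_state[OF A'(1) vis(2)]])
  then show ?thesis using confeq_ctr[OF A'(2) disj] A'(2) disj
    by (auto simp: discards_disjointly_def intro: esem_rel_pmf_confeq)
qed

lemma esem_ptrace:
  assumes "esem C \<pi> \<Theta>" "C = Conf s P R" "P \<equiv>\<^sub>s Par A (discarding qs)" "qbits A \<inter> set qs = {}"
    "qbits R \<inter> set qs = {}" "set qs \<subseteq> fst s"
  shows "(\<forall>C'\<in>set_pmf \<Theta>. discards_disjointly qs C') \<and>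
    esem (Conf (ptrace qs s) A R) \<pi> (map_pmf (ctr qs) \<Theta>)"
  using assms
proof (induction arbitrary: P rule: esem.induct)
  case (e_proc s P \<Delta> R)
  then show ?case using esem_proc_ptrace by simp
next
  case (e_obs \<pi> s R \<Delta> P)
  then show ?case using esem_obs_ptrace by simp
next
  case (e_obs_out \<pi> s R c v R' P P')
  then show ?case using esem_comm_ptrace[of "OutA c v" "InA c v"] by (simp add: dual_def)
next
  case (e_obs_in \<pi> s R c v R' P P')
  then show ?case using esem_comm_ptrace[of "InA c v" "OutA c v"] by (simp add: dual_def)
next
  case (e_cong C C' \<pi> \<Theta>' \<Theta>)
  obtain P' where C': "C' = Conf s P' R" "P' \<equiv>\<^sub>s Par A (discarding qs)"
    using e_cong.hyps(1) e_cong.prems(1,2) by (auto simp: confeq_Conf_iff intro: sc_trans sc_sym)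
  then have IH: "\<forall>C'\<in>set_pmf \<Theta>'. discards_disjointly qs C'"
    "esem (Conf (ptrace qs s) A R) \<pi> (map_pmf (ctr qs) \<Theta>')"
    using e_cong.IH e_cong.prems(3-5) by blast+
  have "\<forall>C''\<in>set_pmf \<Theta>. discards_disjointly qs C''"
    using rel_pmf_imp_rel_set[OF e_cong.hyps(3)] IH(1) ctr_confeq(2) by (fastforce simp: rel_set_def)
  moreover have "rel_pmf confeq (map_pmf (ctr qs) \<Theta>') (map_pmf (ctr qs) \<Theta>)"
    by (rule rel_pmf_mapI[OF e_cong.hyps(3)]) (use IH(1) ctr_confeq(1) in blast)
  ultimately show ?case using IH(2) esem_rel_pmf_confeq by blast
qed

lemma esem_proc_ptrace_reflect:
  fixes R :: proc
  assumes "plts (ptrace qs s) A TauA \<Delta>" "qbits A \<inter> set qs = {}" "set qs \<subseteq> fst s"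
  shows "\<exists>\<Theta>0. esem (Conf s (Par A (discarding qs)) R) Diamond \<Theta>0 \<and>
    (\<forall>C\<in>set_pmf \<Theta>0. discards_disjointly qs C) \<and>
    rel_pmf confeq (map_pmf (\<lambda>(s', P'). Conf s' P' R) \<Delta>) (map_pmf (ctr qs) \<Theta>0)"
proof -
  obtain \<Delta>0 where A: "plts s A TauA \<Delta>0" "\<Delta> = map_pmf (apfst (ptrace qs)) \<Delta>0"
    using plts_ptrace_reflect[OF assms(1) refl assms(3)] by blast
  have disj: "qbits (snd y) \<inter> set qs = {}" if "y \<in> set_pmf \<Delta>0" for y
    using plts_derivative[of s A TauA \<Delta>0 "fst y" "snd y"] A(1) that assms(2) by auto
  let ?\<Theta>0 = "map_pmf (\<lambda>(s', P'). Conf s' (Par P' (discarding qs)) R) \<Delta>0"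
  have "esem (Conf s (Par A (discarding qs)) R) Diamond ?\<Theta>0"
    using e_proc[OF plts.p_parl[OF A(1)]] by (simp add: pmf.map_comp comp_def case_prod_unfold)
  moreover have "\<forall>C\<in>set_pmf ?\<Theta>0. discards_disjointly qs C"
    using disj discards_disjointly_Par_discarding by (auto simp: case_prod_unfold)
  moreover have "rel_pmf confeq (map_pmf (\<lambda>y. Conf (ptrace qs (fst y)) (snd y) R) \<Delta>0)
      (map_pmf (\<lambda>y. ctr qs (Conf (fst y) (Par (snd y) (discarding qs)) R)) \<Delta>0)"
    by (rule rel_pmf_map_sameI, rule confeq_ctr[OF sc_refl]) (use disj in auto)
  then have "rel_pmf confeq (map_pmf (\<lambda>(s', P'). Conf s' P' R) \<Delta>) (map_pmf (ctr qs) ?\<Theta>0)"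
    by (simp add: A(2) pmf.map_comp comp_def case_prod_unfold)
  ultimately show ?thesis by blast
qed

lemma esem_obs_ptrace_reflect:
  assumes "ostep \<pi> (ptrace qs s) R TauA \<Delta>" "qbits A \<inter> set qs = {}" "set qs \<subseteq> fst s"
  shows "\<exists>\<Theta>0. esem (Conf s (Par A (discarding qs)) R) (Path \<pi>) \<Theta>0 \<and>
    (\<forall>C\<in>set_pmf \<Theta>0. discards_disjointly qs C) \<and>
    rel_pmf confeq (map_pmf (\<lambda>(s', R'). Conf s' A R') \<Delta>) (map_pmf (ctr qs) \<Theta>0)"
proof -
  obtain \<Delta>0 where R: "ostep \<pi> s R TauA \<Delta>0" "\<Delta> = map_pmf (apfst (ptrace qs)) \<Delta>0"
    using ostep_ptrace_reflect[OF assms(1) refl assms(3)] by blast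
  let ?\<Theta>0 = "map_pmf (\<lambda>(s', R'). Conf s' (Par A (discarding qs)) R') \<Delta>0"
  have "esem (Conf s (Par A (discarding qs)) R) (Path \<pi>) ?\<Theta>0"
    by (rule e_obs[OF R(1)])
  moreover have "\<forall>C\<in>set_pmf ?\<Theta>0. discards_disjointly qs C"
    using assms(2) by (auto intro: discards_disjointly_Par_discarding)
  moreover have "rel_pmf confeq (map_pmf (\<lambda>y. Conf (ptrace qs (fst y)) A (snd y)) \<Delta>0)
      (map_pmf (\<lambda>y. ctr qs (Conf (fst y) (Par A (discarding qs)) (snd y))) \<Delta>0)"
    by (rule rel_pmf_map_sameI, rule confeq_ctr[OF sc_refl assms(2)])
  then have "rel_pmf confeq (map_pmf (\<lambda>(s', R'). Conf s' A R') \<Delta>) (map_pmf (ctr qs) ?\<Theta>0)"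
    by (simp add: R(2) pmf.map_comp comp_def case_prod_unfold)
  ultimately show ?thesis by blast
qed

lemma esem_comm_ptrace_reflect:
  assumes "dual \<alpha> \<beta>" "ostep \<pi> (ptrace qs s) R \<alpha> (return_pmf (ptrace qs s, R'))"
    "plts (ptrace qs s) A \<beta> (return_pmf (ptrace qs s, A'))"
    "qbits A \<inter> set qs = {}" "qbits R \<inter> set qs = {}"
  shows "\<exists>\<Theta>0. esem (Conf s (Par A (discarding qs)) R) (Path \<pi>) \<Theta>0 \<and>
    (\<forall>C\<in>set_pmf \<Theta>0. discards_disjointly qs C) \<and>
    rel_pmf confeq (return_pmf (Conf (ptrace qs s) A' R')) (map_pmf (ctr qs) \<Theta>0)"
proof -
  have vis: "\<alpha> \<noteq> TauA" "\<beta> \<noteq> TauA" using dual_visible[OF assms(1)] by simp_all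
  have R': "ostep \<pi> s R \<alpha> (return_pmf (s, R'))"
    by (rule ostep_visible_any_state[OF assms(2) vis(1)])
  have A': "plts s A \<beta> (return_pmf (s, A'))"
    by (rule plts_visible_any_state[OF assms(3) vis(2)])
  have disj: "qbits A' \<inter> set qs = {}"
    using obs_comm_qbits[OF assms(1) R' A'] assms(4,5) by blast
  show ?thesis
    using esem_obs_comm[OF assms(1) R' plts_Par_left_return[OF A']] confeq_ctr[OF sc_refl disj]
      discards_disjointly_Par_discarding[OF disj] by fastforce
qed

lemma esem_ptrace_reflect:
  assumes "esem C \<pi> \<Theta>" "C = Conf (ptrace qs s) A R" "qbits A \<inter> set qs = {}"
    "qbits R \<inter> set qs = {}" "set qs \<subseteq> fst s"
  shows "\<exists>\<Theta>0. esem (Conf s (Par A (discarding qs)) R) \<pi> \<Theta>0 \<and>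
    (\<forall>C'\<in>set_pmf \<Theta>0. discards_disjointly qs C') \<and> rel_pmf confeq \<Theta> (map_pmf (ctr qs) \<Theta>0)"
  using assms
proof (induction arbitrary: A rule: esem.induct)
  case (e_proc t P \<Delta> R)
  then show ?case using esem_proc_ptrace_reflect by simp
next
  case (e_obs \<pi> t R \<Delta> P)
  then show ?case using esem_obs_ptrace_reflect by simp
next
  case (e_obs_out \<pi> t R c v R' P P')
  then show ?case using esem_comm_ptrace_reflect[of "OutA c v" "InA c v"] by (simp add: dual_def)
next
  case (e_obs_in \<pi> t R c v R' P P')
  then show ?case using esem_comm_ptrace_reflect[of "InA c v" "OutA c v"] by (simp add: dual_def)
next
  case (e_cong C C' \<pi> \<Theta>' \<Theta>)
  obtain A' where C': "C' = Conf (ptrace qs s) A' R" "A \<equiv>\<^sub>s A'"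
    using e_cong.hyps(1) e_cong.prems(1) by (auto simp: confeq_Conf_iff)
  then have "qbits A' \<inter> set qs = {}" using scong_qbits e_cong.prems(2) by simp
  then obtain \<Theta>0 where IH: "esem (Conf s (Par A' (discarding qs)) R) \<pi> \<Theta>0"
    "\<forall>C'\<in>set_pmf \<Theta>0. discards_disjointly qs C'" "rel_pmf confeq \<Theta>' (map_pmf (ctr qs) \<Theta>0)"
    using e_cong.IH[OF C'(1)] e_cong.prems(3,4) by blast
  have "esem (Conf s (Par A (discarding qs)) R) \<pi> \<Theta>0"
    by (rule esem_confeq[OF _ IH(1)]) (simp add: sc_par[OF C'(2) sc_refl])
  moreover have "rel_pmf confeq \<Theta> (map_pmf (ctr qs) \<Theta>0)"
    by (rule rel_pmf_confeq_trans[OF rel_pmf_confeq_sym[OF e_cong.hyps(3)] IH(3)])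
  ultimately show ?case using IH(2) by blast
qed

lemma wf_conf_discardsE [consumes 2, case_names Bot Conf]:
  assumes "wf_conf C" "discards qs C"
  obtains "C = Bot"
  | s P R A where "C = Conf s P R" "P \<equiv>\<^sub>s Par A (discarding qs)" "qbits A \<inter> set qs = {}"
      "qbits R \<inter> set qs = {}" "set qs \<subseteq> fst s"
proof (cases C)
  case (Conf s P R)
  then obtain A where A: "P \<equiv>\<^sub>s Par A (discarding qs)" using assms(2) by (auto simp: discards_def)
  have wf: "lin P" "qbits P \<inter> qbits R = {}" "qbits P \<union> qbits R \<subseteq> fst s"
    using assms(1) Conf by auto
  have "qbits P = qbits A \<union> set qs" using scong_qbits[OF A] by simp
  then show ?thesis
    using that(2)[OF Conf A lin_scong_Par_discarding_disjoint[OF A wf(1)]] wf by auto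
qed (use that in simp)

lemma esem_ctr:
  assumes "wf_conf C" "discards qs C" "esem C \<pi> \<Theta>"
  shows "(\<forall>C'\<in>set_pmf \<Theta>. discards qs C') \<and> esem (ctr qs C) \<pi> (map_pmf (ctr qs) \<Theta>)"
  using assms(1,2)
proof (cases rule: wf_conf_discardsE)
  case Bot
  then show ?thesis using esem_not_Bot[OF assms(3)] by simp
next
  case (Conf s P R A)
  then have "(\<forall>C'\<in>set_pmf \<Theta>. discards_disjointly qs C') \<and>
      esem (Conf (ptrace qs s) A R) \<pi> (map_pmf (ctr qs) \<Theta>)"
    using esem_ptrace[OF assms(3)] by blast
  moreover have "confeq (ctr qs C) (Conf (ptrace qs s) A R)"
    using confeq_sym[OF confeq_ctr[OF Conf(2,3)]] Conf(1) by simp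
  ultimately show ?thesis using discards_disjointly_discards esem_confeq by blast
qed

lemma esem_ctr_reflect:
  assumes "wf_conf C" "discards qs C" "esem (ctr qs C) \<pi> \<Theta>"
  shows "\<exists>\<Theta>0. esem C \<pi> \<Theta>0 \<and> (\<forall>C'\<in>set_pmf \<Theta>0. discards qs C') \<and> rel_pmf confeq \<Theta> (map_pmf (ctr qs) \<Theta>0)"
  using assms(1,2)
proof (cases rule: wf_conf_discardsE)
  case Bot
  then show ?thesis using esem_not_Bot[OF assms(3)] by simp
next
  case (Conf s P R A)
  have "esem (Conf (ptrace qs s) A R) \<pi> \<Theta>"
    using esem_confeq[OF confeq_ctr[OF Conf(2,3)]] assms(3) Conf(1) by simp
  then obtain \<Theta>0 where "esem (Conf s (Par A (discarding qs)) R) \<pi> \<Theta>0"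
    "\<forall>C'\<in>set_pmf \<Theta>0. discards_disjointly qs C'" "rel_pmf confeq \<Theta> (map_pmf (ctr qs) \<Theta>0)"
    using esem_ptrace_reflect[OF _ refl Conf(3,4,5)] by blast
  moreover have "confeq C (Conf s (Par A (discarding qs)) R)" using Conf(1,2) by simp
  ultimately show ?thesis using esem_confeq discards_disjointly_discards by blast
qed

section \<open>Lifting to distributions\<close>

lemma esem_d_map_pmf:
  assumes "esem_d \<pi> \<Delta> \<Delta>'" "\<And>C \<Theta>. C \<in> set_pmf \<Delta> \<Longrightarrow> esem C \<pi> \<Theta> \<Longrightarrow> esem (f C) \<pi> (map_pmf f \<Theta>)"
  shows "esem_d \<pi> (map_pmf f \<Delta>) (map_pmf f \<Delta>')"
proof -
  obtain \<Phi> where \<Phi>: "map_pmf fst \<Phi> = \<Delta>" "\<forall>(C, \<Theta>)\<in>set_pmf \<Phi>. esem C \<pi> \<Theta>" "\<Delta>' = bind_pmf \<Phi> snd"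
    using assms(1) by (auto simp: esem_d_def)
  let ?\<Phi> = "map_pmf (\<lambda>(C, \<Theta>). (f C, map_pmf f \<Theta>)) \<Phi>"
  have "map_pmf fst ?\<Phi> = map_pmf f \<Delta>"
    by (simp add: \<Phi>(1)[symmetric] pmf.map_comp comp_def case_prod_unfold)
  moreover have "\<forall>(C, \<Theta>)\<in>set_pmf ?\<Phi>. esem C \<pi> \<Theta>"
    using \<Phi>(1,2) assms(2) by fastforce
  moreover have "map_pmf f \<Delta>' = bind_pmf ?\<Phi> snd"
    by (simp add: \<Phi>(3) map_bind_pmf bind_map_pmf case_prod_unfold)
  ultimately show ?thesis unfolding esem_d_def by blast
qed

lemma esem_d_set_pmf:
  assumes "esem_d \<pi> \<Delta> \<Delta>'" "\<And>C \<Theta>. C \<in> set_pmf \<Delta> \<Longrightarrow> esem C \<pi> \<Theta> \<Longrightarrow> \<forall>C'\<in>set_pmf \<Theta>. Q C'"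
  shows "\<forall>C'\<in>set_pmf \<Delta>'. Q C'"
  using assms by (fastforce simp: esem_d_def)

lemma esem_d_reflect:
  assumes "esem_d \<pi> (map_pmf f \<Delta>) \<Theta>"
    and "\<And>C \<Theta>1. C \<in> set_pmf \<Delta> \<Longrightarrow> esem (f C) \<pi> \<Theta>1 \<Longrightarrow>
      \<exists>\<Theta>0. esem C \<pi> \<Theta>0 \<and> (\<forall>C'\<in>set_pmf \<Theta>0. Q C') \<and> rel_pmf S \<Theta>1 (map_pmf f \<Theta>0)"
  shows "\<exists>\<Delta>'. esem_d \<pi> \<Delta> \<Delta>' \<and> (\<forall>C'\<in>set_pmf \<Delta>'. Q C') \<and> rel_pmf S \<Theta> (map_pmf f \<Delta>')"
proof -
  obtain \<Phi> where \<Phi>: "map_pmf fst \<Phi> = map_pmf f \<Delta>" "\<forall>(C, \<Theta>')\<in>set_pmf \<Phi>. esem C \<pi> \<Theta>'"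
    "\<Theta> = bind_pmf \<Phi> snd"
    using assms(1) by (auto simp: esem_d_def)
  have "rel_pmf (=) (map_pmf f \<Delta>) (map_pmf fst \<Phi>)"
    using \<Phi>(1) by (simp add: pmf.rel_eq)
  then have "rel_pmf (\<lambda>C x. f C = fst x) \<Delta> \<Phi>"
    unfolding pmf.rel_map .
  then obtain J where J: "\<And>C x. (C, x) \<in> set_pmf J \<Longrightarrow> f C = fst x"
    "map_pmf fst J = \<Delta>" "map_pmf snd J = \<Phi>"
    by (erule rel_pmf.cases)
  have "\<exists>\<Theta>0. esem (fst p) \<pi> \<Theta>0 \<and> (\<forall>C'\<in>set_pmf \<Theta>0. Q C') \<and> rel_pmf S (snd (snd p)) (map_pmf f \<Theta>0)"
    if "p \<in> set_pmf J" for p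
  proof (rule assms(2))
    show "fst p \<in> set_pmf \<Delta>" using that J(2) by force
    have "snd p \<in> set_pmf \<Phi>" using that J(3) by force
    then show "esem (f (fst p)) \<pi> (snd (snd p))"
      using \<Phi>(2) J(1)[of "fst p" "snd p"] that by (auto simp: case_prod_unfold)
  qed
  then obtain G where G: "\<And>p. p \<in> set_pmf J \<Longrightarrow>
      esem (fst p) \<pi> (G p) \<and> (\<forall>C'\<in>set_pmf (G p). Q C') \<and> rel_pmf S (snd (snd p)) (map_pmf f (G p))"
    by metis
  let ?\<Phi>0 = "map_pmf (\<lambda>p. (fst p, G p)) J"
  have "esem_d \<pi> \<Delta> (bind_pmf ?\<Phi>0 snd)"
    unfolding esem_d_def
    by (rule exI[of _ ?\<Phi>0]) (auto simp: J(2)[symmetric] pmf.map_comp comp_def G)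
  moreover have "\<forall>C'\<in>set_pmf (bind_pmf ?\<Phi>0 snd). Q C'" using G by auto
  moreover have "rel_pmf S (bind_pmf J (\<lambda>p. snd (snd p))) (bind_pmf J (\<lambda>p. map_pmf f (G p)))"
    by (rule rel_pmf_bindI[where R = "\<lambda>p p'. p = p' \<and> p \<in> set_pmf J"])
      (auto intro: rel_pmf_reflI dest: G)
  then have "rel_pmf S \<Theta> (map_pmf f (bind_pmf ?\<Phi>0 snd))"
    by (simp add: \<Phi>(3) J(3)[symmetric] bind_map_pmf map_bind_pmf)
  ultimately show ?thesis by blast
qed

lemma discards_ctx [simp]: "discards qs (ctx R' C) \<longleftrightarrow> discards qs C"
  by (cases C) (auto simp: discards_def)

lemma octx_ptr: "octx R' (ptr qs \<Delta>) = map_pmf (ctr qs) (octx R' \<Delta>)"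
proof -
  have "ctr qs (ctx R' C) = ctx R' (ctr qs C)" for C by (cases C) auto
  then show ?thesis by (simp add: octx_def ptr_def pmf.map_comp comp_def)
qed

theorem lemmaD1:
  fixes \<Delta> :: "conf pmf" and qs :: "qubit list" and R' :: proc and \<pi> :: idx
  assumes "wd_tr qs \<Delta>"
    and "is_obs R'"
    and "\<forall>C \<in> set_pmf (octx R' \<Delta>). wf_conf C"
  shows "(\<forall>\<Delta>'. esem_d \<pi> (octx R' \<Delta>) \<Delta>' \<longrightarrow>
             wd_tr qs \<Delta>' \<and> esem_d \<pi> (octx R' (ptr qs \<Delta>)) (ptr qs \<Delta>'))
       \<and> (\<forall>\<Theta>. esem_d \<pi> (octx R' (ptr qs \<Delta>)) \<Theta> \<longrightarrow>
             (\<exists>\<Delta>'. esem_d \<pi> (octx R' \<Delta>) \<Delta>' \<and> wd_tr qs \<Delta>' \<and> rel_pmf confeq \<Theta> (ptr qs \<Delta>')))"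
proof -
  have conf: "wf_conf C \<and> discards qs C" if "C \<in> set_pmf (octx R' \<Delta>)" for C
    using that assms(1,3) by (auto simp: octx_def wd_tr_def)
  show ?thesis
  proof (intro conjI allI impI)
    fix \<Delta>' assume step: "esem_d \<pi> (octx R' \<Delta>) \<Delta>'"
    show "wd_tr qs \<Delta>'"
      unfolding wd_tr_def by (rule esem_d_set_pmf[OF step]) (use conf esem_ctr in blast)
    show "esem_d \<pi> (octx R' (ptr qs \<Delta>)) (ptr qs \<Delta>')"
      unfolding octx_ptr unfolding ptr_def
      by (rule esem_d_map_pmf[OF step]) (use conf esem_ctr in blast)
  next
    fix \<Theta> assume "esem_d \<pi> (octx R' (ptr qs \<Delta>)) \<Theta>"
    then show "\<exists>\<Delta>'. esem_d \<pi> (octx R' \<Delta>) \<Delta>' \<and> wd_tr qs \<Delta>' \<and> rel_pmf confeq \<Theta> (ptr qs \<Delta>')"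
      unfolding octx_ptr unfolding ptr_def wd_tr_def
      by (rule esem_d_reflect) (use conf esem_ctr_reflect in blast)
  qed
qed

end
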